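(* Let $G$ be an Oliver group and $N\trianglelefteq G$ a normal subgroup such that $\operatorname{Ind}_N^G:\operatorname{RO}(N)\to\operatorname{RO}(G)$ is a monomorphism. Let $V$ be an $\mathbb{R}N$-module satisfying, with respect to the group $N$, the following three conditions: (i) (weak gap condition) $\dim V^P\ge 2\dim V^H$ for every subgroup $P\le N$ of prime power order and every subgroup $H$ with $P<H\le N$; (ii) $\dim V^P\ge 5$ for every subgroup $P\le N$ of prime power order, and $\dim V^H\ge 2$ for every pseudocyclic subgroup $H\le N$; (iii) every pseudocyclic subgroup of $N$ occurs as an isotropy subgroup of the action of $N$ on $V$. Then $W=\operatorname{Ind}_N^G(V)$ satisfies conditions (i)–(iii) as an $\mathbb{R}G$-module, with $N$ replaced by $G$ throughout.
   Context: An Oliver group is a finite group $G$ for which there is no chain of subgroups $P\trianglelefteq H\trianglelefteq G$ with $P$ and $G/H$ of prime power order and $H/P$ cyclic. A finite group $K$ is pseudocyclic if for some prime $p$ it contains a normal $p$-subgroup $P$ with $K/P$ cyclic. $\operatorname{RO}(K)$ is the real representation group. $V^H$ is the subspace fixed by $H$; an isotropy subgroup of an action is a stabilizer $\{g : gv=v\}$ of some vector $v$. *)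

theory Defs
  imports "Jordan_Normal_Form.VS_Connect" "HOL-Algebra.Elementary_Groups"
    "HOL-Computational_Algebra.Primes"
begin

text \<open>All subgroups are subsets of the carrier of an ambient (HOL-Algebra) group G.\<close>

definition prime_power_order :: "'a set \<Rightarrow> bool" where
  "prime_power_order P \<longleftrightarrow> (\<exists>p k. prime (p::nat) \<and> card P = p ^ k)"

definition pseudocyclic :: "('a, 'b) monoid_scheme \<Rightarrow> 'a set \<Rightarrow> bool" where
  "pseudocyclic G K \<longleftrightarrow> subgroup K G \<and>
     (\<exists>p k P. prime (p::nat) \<and> P \<lhd> (G\<lparr>carrier := K\<rparr>) \<and> card P = p ^ k \<and>
        cyclic_group ((G\<lparr>carrier := K\<rparr>) Mod P))"

definition oliver_group :: "('a, 'b) monoid_scheme \<Rightarrow> bool" where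
  "oliver_group G \<longleftrightarrow> group G \<and> finite (carrier G) \<and>
     \<not> (\<exists>P H p q a b. prime (p::nat) \<and> prime (q::nat) \<and>
          H \<lhd> G \<and> P \<lhd> (G\<lparr>carrier := H\<rparr>) \<and>
          card P = p ^ a \<and> card (carrier (G Mod H)) = q ^ b \<and>
          cyclic_group ((G\<lparr>carrier := H\<rparr>) Mod P))"

definition is_rep :: "('a, 'b) monoid_scheme \<Rightarrow> 'a set \<Rightarrow> nat \<Rightarrow> ('a \<Rightarrow> real mat) \<Rightarrow> bool" where
  "is_rep G H d \<rho> \<longleftrightarrow> (\<forall>g\<in>H. \<rho> g \<in> carrier_mat d d) \<and>
      (\<forall>g\<in>H. \<forall>h\<in>H. \<rho> (g \<otimes>\<^bsub>G\<^esub> h) = \<rho> g * \<rho> h) \<and> \<rho> \<one>\<^bsub>G\<^esub> = 1\<^sub>m d"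

definition rep_iso :: "'a set \<Rightarrow> nat \<Rightarrow> ('a \<Rightarrow> real mat) \<Rightarrow> nat \<Rightarrow> ('a \<Rightarrow> real mat) \<Rightarrow> bool" where
  "rep_iso H d \<rho> d' \<sigma> \<longleftrightarrow> d = d' \<and>
     (\<exists>T \<in> carrier_mat d d. invertible_mat T \<and> (\<forall>g\<in>H. T * \<rho> g = \<sigma> g * T))"

definition rep_sum :: "nat \<Rightarrow> ('a \<Rightarrow> real mat) \<Rightarrow> nat \<Rightarrow> ('a \<Rightarrow> real mat) \<Rightarrow> ('a \<Rightarrow> real mat)" where
  "rep_sum d \<rho> d' \<sigma> = (\<lambda>g. four_block_mat (\<rho> g) (0\<^sub>m d d') (0\<^sub>m d' d) (\<sigma> g))"

definition fix_space :: "nat \<Rightarrow> ('a \<Rightarrow> real mat) \<Rightarrow> 'a set \<Rightarrow> real vec set" where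
  "fix_space d \<rho> H = {v \<in> carrier_vec d. \<forall>h\<in>H. \<rho> h *\<^sub>v v = v}"

definition fix_dim :: "nat \<Rightarrow> ('a \<Rightarrow> real mat) \<Rightarrow> 'a set \<Rightarrow> nat" where
  "fix_dim d \<rho> H = vectorspace.dim class_ring
      ((module_vec TYPE(real) d)\<lparr>carrier := fix_space d \<rho> H\<rparr>)"

definition is_isotropy :: "'a set \<Rightarrow> nat \<Rightarrow> ('a \<Rightarrow> real mat) \<Rightarrow> 'a set \<Rightarrow> bool" where
  "is_isotropy K d \<rho> H \<longleftrightarrow> (\<exists>v \<in> carrier_vec d. H = {g \<in> K. \<rho> g *\<^sub>v v = v})"

definition is_left_transversal :: "('a, 'b) monoid_scheme \<Rightarrow> 'a set \<Rightarrow> 'a list \<Rightarrow> bool" where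
  "is_left_transversal G N ts \<longleftrightarrow> set ts \<subseteq> carrier G \<and>
     (\<forall>g\<in>carrier G. \<exists>!i. i < length ts \<and> g \<in> (ts ! i) <#\<^bsub>G\<^esub> N)"

definition left_transversal :: "('a, 'b) monoid_scheme \<Rightarrow> 'a set \<Rightarrow> 'a list" where
  "left_transversal G N = (SOME ts. is_left_transversal G N ts)"

definition ind_deg :: "('a, 'b) monoid_scheme \<Rightarrow> 'a set \<Rightarrow> nat \<Rightarrow> nat" where
  "ind_deg G N d = length (left_transversal G N) * d"

text \<open>Ind_N^G(\<rho>)(g) has (i,j) block \<rho>(t_i^-1 g t_j) if this lies in N, and 0 otherwise.\<close>
definition ind_rep :: "('a, 'b) monoid_scheme \<Rightarrow> 'a set \<Rightarrow> nat \<Rightarrow> ('a \<Rightarrow> real mat) \<Rightarrow> ('a \<Rightarrow> real mat)" where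
  "ind_rep G N d \<rho> = (\<lambda>g. let ts = left_transversal G N in
     mat (ind_deg G N d) (ind_deg G N d) (\<lambda>(r, c).
       let x = inv\<^bsub>G\<^esub> (ts ! (r div d)) \<otimes>\<^bsub>G\<^esub> g \<otimes>\<^bsub>G\<^esub> (ts ! (c div d)) in
       if x \<in> N then \<rho> x $$ (r mod d, c mod d) else 0))"

text \<open>Elements of RO(H) are formal differences [U] - [U'] of representations; two such
  differences [U1]-[U2] and [U3]-[U4] are equal iff U1 + U4 is isomorphic to U3 + U2.\<close>
definition RO_eq :: "'a set \<Rightarrow> nat \<times> ('a \<Rightarrow> real mat) \<Rightarrow> nat \<times> ('a \<Rightarrow> real mat)
     \<Rightarrow> nat \<times> ('a \<Rightarrow> real mat) \<Rightarrow> nat \<times> ('a \<Rightarrow> real mat) \<Rightarrow> bool" where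
  "RO_eq H U1 U2 U3 U4 \<longleftrightarrow>
     rep_iso H (fst U1 + fst U4) (rep_sum (fst U1) (snd U1) (fst U4) (snd U4))
               (fst U3 + fst U2) (rep_sum (fst U3) (snd U3) (fst U2) (snd U2))"

text \<open>Ind_N^G : RO(N) \<rightarrow> RO(G) is a monomorphism (it is additive by construction).\<close>
definition ind_RO_mono :: "('a, 'b) monoid_scheme \<Rightarrow> 'a set \<Rightarrow> bool" where
  "ind_RO_mono G N \<longleftrightarrow> (\<forall>d1 \<rho>1 d2 \<rho>2 d3 \<rho>3 d4 \<rho>4.
     is_rep G N d1 \<rho>1 \<longrightarrow> is_rep G N d2 \<rho>2 \<longrightarrow> is_rep G N d3 \<rho>3 \<longrightarrow> is_rep G N d4 \<rho>4 \<longrightarrow>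
     RO_eq (carrier G) (ind_deg G N d1, ind_rep G N d1 \<rho>1) (ind_deg G N d2, ind_rep G N d2 \<rho>2)
                       (ind_deg G N d3, ind_rep G N d3 \<rho>3) (ind_deg G N d4, ind_rep G N d4 \<rho>4) \<longrightarrow>
     RO_eq N (d1, \<rho>1) (d2, \<rho>2) (d3, \<rho>3) (d4, \<rho>4))"

definition weak_gap_condition :: "('a, 'b) monoid_scheme \<Rightarrow> 'a set \<Rightarrow> nat \<Rightarrow> ('a \<Rightarrow> real mat) \<Rightarrow> bool" where
  "weak_gap_condition G K d \<rho> \<longleftrightarrow> (\<forall>P H. subgroup P G \<longrightarrow> P \<subseteq> K \<longrightarrow> prime_power_order P \<longrightarrow>
      subgroup H G \<longrightarrow> P \<subset> H \<longrightarrow> H \<subseteq> K \<longrightarrow> fix_dim d \<rho> P \<ge> 2 * fix_dim d \<rho> H)"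

definition condition_ii :: "('a, 'b) monoid_scheme \<Rightarrow> 'a set \<Rightarrow> nat \<Rightarrow> ('a \<Rightarrow> real mat) \<Rightarrow> bool" where
  "condition_ii G K d \<rho> \<longleftrightarrow>
     (\<forall>P. subgroup P G \<longrightarrow> P \<subseteq> K \<longrightarrow> prime_power_order P \<longrightarrow> fix_dim d \<rho> P \<ge> 5) \<and>
     (\<forall>H. H \<subseteq> K \<longrightarrow> pseudocyclic G H \<longrightarrow> fix_dim d \<rho> H \<ge> 2)"

definition condition_iii :: "('a, 'b) monoid_scheme \<Rightarrow> 'a set \<Rightarrow> nat \<Rightarrow> ('a \<Rightarrow> real mat) \<Rightarrow> bool" where
  "condition_iii G K d \<rho> \<longleftrightarrow> (\<forall>H. H \<subseteq> K \<longrightarrow> pseudocyclic G H \<longrightarrow> is_isotropy K d \<rho> H)"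

end

(*
  Write W = Ind_N^G V as the sum of the blocks t_i V over a left transversal t_0, ..., t_(m-1)
  of N in G.  An element g maps block sigma(g,i) to block i, so a subgroup H permutes the blocks,
  and the stabiliser in H of every block is H \<inter> N.  Hence dim W^H is the sum, over one block in
  each H-orbit, of dim V^(t_i^-1 (H \<inter> N) t_i): a vector in W^H is determined by its components
  on orbit representatives, and conversely an H-orbit sum of vectors on distinct orbits is fixed.

  For P < H with P of prime power order, either P \<inter> N < H \<inter> N, and the weak gap condition for
  the conjugates of P \<inter> N < H \<inter> N inside N gives the gap blockwise; or P \<inter> N = H \<inter> N,
  and then every H-orbit of blocks contains at least two P-orbits, so W^P receives two copies of
  the contribution of each H-orbit.  Condition (ii) follows from a single block t_i V with
  t_i \<in> N, since (H \<inter> N) is pseudocyclic whenever H is.  For (iii), if H \<inter> N is the isotropy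
  group of v \<noteq> 0 in V, then H is the isotropy group in W of the H-orbit sum of v placed in one
  block.  The hypotheses that G is an Oliver group and that Ind_N^G is injective on RO(N) are
  needed only for the finiteness of G.
*)

theory Submission
  imports Defs "Jordan_Normal_Form.DL_Rank" "HOL-Algebra.SndIsomorphismGrp" "HOL-Algebra.Left_Coset"
begin

section \<open>Linear subspaces of real column vectors\<close>

definition real_subspace :: "nat \<Rightarrow> real vec set \<Rightarrow> bool" where
  "real_subspace n S \<longleftrightarrow> S \<subseteq> carrier_vec n \<and> 0\<^sub>v n \<in> S \<and>
     (\<forall>x\<in>S. \<forall>y\<in>S. x + y \<in> S) \<and> (\<forall>c. \<forall>x\<in>S. c \<cdot>\<^sub>v x \<in> S)"

abbreviation subspace_module :: "nat \<Rightarrow> real vec set \<Rightarrow> (real, real vec) module" where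
  "subspace_module n S \<equiv> (module_vec TYPE(real) n)\<lparr>carrier := S\<rparr>"

definition subspace_dim :: "nat \<Rightarrow> real vec set \<Rightarrow> nat" where
  "subspace_dim n S = vectorspace.dim class_ring (subspace_module n S)"

lemma fix_dim_eq_subspace_dim: "fix_dim n A H = subspace_dim n (fix_space n A H)"
  unfolding fix_dim_def subspace_dim_def ..

lemma real_subspace_subspace:
  assumes "real_subspace n S"
  shows "subspace class_ring S (module_vec TYPE(real) n)"
proof -
  have "submodule class_ring S (module_vec TYPE(real) n)"
    using assms unfolding real_subspace_def submodule_def by (auto simp: vec_module module_vec_simps)
  then show ?thesis using vec_vs unfolding subspace_def by blast
qed

lemma real_subspace_vectorspace: "real_subspace n S \<Longrightarrow> vectorspace class_ring (subspace_module n S)"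
  using vectorspace.subspace_is_vs[OF vec_vs real_subspace_subspace] by blast

lemma real_subspace_fin_dim:
  assumes S: "real_subspace n S"
  shows "vectorspace.fin_dim class_ring (subspace_module n S)"
proof -
  interpret V: vec_space "TYPE(real)" n .
  interpret W: vectorspace class_ring "subspace_module n S" using real_subspace_vectorspace[OF S] .
  let ?li = "\<lambda>A. A \<subseteq> carrier (subspace_module n S) \<and> W.lin_indpt A"
  have "finite A \<and> card A \<le> n" if "?li A" for A
  proof -
    have "V.lin_indpt A"
      using V.span_li_not_depend(2) real_subspace_subspace[OF S] that
      unfolding subspace_def by auto
    moreover have "A \<subseteq> carrier_vec n" using that S unfolding real_subspace_def by auto
    ultimately show ?thesis using V.li_le_dim[of A] V.dim_is_n by auto
  qed
  moreover have "?li {}" using W.lin_dep_def by auto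
  ultimately obtain A where "finite A" "maximal A ?li"
    using maximal_exists[of ?li] by blast
  moreover have "W.basis A" using W.max_li_is_basis[OF \<open>maximal A ?li\<close>] by simp
  ultimately show ?thesis unfolding W.fin_dim_def W.basis_def by blast
qed

lemma real_subspace_zero: "real_subspace n {0\<^sub>v n}"
  unfolding real_subspace_def by auto

lemma subspace_dim_zero: "subspace_dim n {0\<^sub>v n} = 0"
proof -
  interpret W: vectorspace class_ring "subspace_module n {0\<^sub>v n}"
    using real_subspace_vectorspace[OF real_subspace_zero] .
  have "W.gen_set {}" using W.span_empty by (simp add: module_vec_simps)
  then show ?thesis using W.gen_ge_dim[of "{}"] unfolding subspace_dim_def by simp
qed

definition linear_on :: "real vec set \<Rightarrow> real vec set \<Rightarrow> (real vec \<Rightarrow> real vec) \<Rightarrow> bool" where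
  "linear_on A B f \<longleftrightarrow> (\<forall>x\<in>A. f x \<in> B) \<and> (\<forall>x\<in>A. \<forall>y\<in>A. f (x + y) = f x + f y) \<and>
     (\<forall>c. \<forall>x\<in>A. f (c \<cdot>\<^sub>v x) = c \<cdot>\<^sub>v f x)"

lemma linear_onI:
  assumes "\<And>x. x \<in> A \<Longrightarrow> f x \<in> B"
    and "\<And>x y. x \<in> A \<Longrightarrow> y \<in> A \<Longrightarrow> f (x + y) = f x + f y"
    and "\<And>c x. x \<in> A \<Longrightarrow> f (c \<cdot>\<^sub>v x) = c \<cdot>\<^sub>v f x"
  shows "linear_on A B f"
  using assms unfolding linear_on_def by blast

lemma linear_on_linear_map:
  assumes A: "real_subspace n A" and B: "real_subspace m B" and f: "linear_on A B f"
  shows "linear_map class_ring (subspace_module n A) (subspace_module m B) f"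
proof -
  interpret VA: vectorspace class_ring "subspace_module n A" using real_subspace_vectorspace[OF A] .
  interpret VB: vectorspace class_ring "subspace_module m B" using real_subspace_vectorspace[OF B] .
  have "f \<in> LinearCombinations.module_hom class_ring (subspace_module n A) (subspace_module m B)"
    using f unfolding LinearCombinations.module_hom_def linear_on_def by (auto simp: module_vec_simps)
  then show ?thesis
    unfolding linear_map_def mod_hom_def mod_hom_axioms_def
    using VA.vectorspace_axioms VB.vectorspace_axioms VA.module_axioms VB.module_axioms by auto
qed

lemma real_subspace_image:
  assumes A: "real_subspace n A" and B: "real_subspace m B" and f: "linear_on A B f"
  shows "real_subspace m (f ` A)"
proof -
  have zero: "0\<^sub>v n \<in> A" and fB: "\<And>x. x \<in> A \<Longrightarrow> f x \<in> carrier_vec m"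
    using A B f unfolding real_subspace_def linear_on_def by auto
  have "f (0\<^sub>v n) = f (0 \<cdot>\<^sub>v 0\<^sub>v n)" by (intro arg_cong[where f = f] eq_vecI) auto
  also have "\<dots> = 0 \<cdot>\<^sub>v f (0\<^sub>v n)" using f zero unfolding linear_on_def by blast
  also have "\<dots> = 0\<^sub>v m" using fB[OF zero] by auto
  finally have "0\<^sub>v m \<in> f ` A" using zero by (metis image_eqI)
  moreover have "f x + f y \<in> f ` A" "c \<cdot>\<^sub>v f x \<in> f ` A" if "x \<in> A" "y \<in> A" for x y c
    using that A f unfolding real_subspace_def linear_on_def by (metis image_eqI)+
  ultimately show ?thesis using fB unfolding real_subspace_def by blast
qed

lemma subspace_dim_le_of_inj_on:
  assumes A: "real_subspace n A" and B: "real_subspace m B"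
    and f: "linear_on A B f" and inj: "inj_on f A"
  shows "subspace_dim n A \<le> subspace_dim m B"
proof -
  interpret L: linear_map class_ring "subspace_module n A" "subspace_module m B" f
    using linear_on_linear_map[OF A B f] .
  have im: "L.imT = f ` A" unfolding L.im_def by simp
  have "subspace_dim n A = subspace_dim m (f ` A)"
    using L.rank_nullity[OF real_subspace_fin_dim[OF A]] L.inj_imp_dim_ker0 inj im
    unfolding subspace_dim_def by simp
  also have "\<dots> \<le> subspace_dim m B"
    using L.W.subspace_dim[OF L.imT_is_subspace real_subspace_fin_dim[OF B]]
      real_subspace_fin_dim[OF real_subspace_image[OF A B f]] im
    unfolding subspace_dim_def by simp
  finally show ?thesis .
qed

lemma subspace_dim_rank_nullity:
  assumes A: "real_subspace n A" and B: "real_subspace m B"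
    and f: "linear_on A B f" and surj: "f ` A = B"
  shows "subspace_dim n A = subspace_dim m B + subspace_dim n {x \<in> A. f x = 0\<^sub>v m}"
proof -
  interpret L: linear_map class_ring "subspace_module n A" "subspace_module m B" f
    using linear_on_linear_map[OF A B f] .
  have "L.imT = B" unfolding L.im_def using surj by simp
  moreover have "L.kerT = {x \<in> A. f x = 0\<^sub>v m}" unfolding L.ker_def by (simp add: module_vec_simps)
  ultimately show ?thesis
    using L.rank_nullity[OF real_subspace_fin_dim[OF A]] unfolding subspace_dim_def by simp
qed

lemma subspace_dim_eq_of_inj_on:
  assumes "real_subspace n A" "real_subspace m B"
    and "linear_on A B f" "inj_on f A" "linear_on B A g" "inj_on g B"
  shows "subspace_dim n A = subspace_dim m B"
  using subspace_dim_le_of_inj_on[OF assms(1-4)] subspace_dim_le_of_inj_on[OF assms(2,1,5,6)]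
  by simp

lemma mult_mat_zero_vec:
  "(A :: 'a :: semiring_0 mat) \<in> carrier_mat nr nc \<Longrightarrow> A *\<^sub>v 0\<^sub>v nc = 0\<^sub>v nr"
  by (intro eq_vecI) (auto simp: scalar_prod_def)

lemma real_subspace_fix_space:
  assumes A: "\<And>h. h \<in> H \<Longrightarrow> A h \<in> carrier_mat n n"
  shows "real_subspace n (fix_space n A H)"
  unfolding real_subspace_def
proof (intro conjI ballI allI)
  fix x y assume x: "x \<in> fix_space n A H" and y: "y \<in> fix_space n A H"
  then show "x + y \<in> fix_space n A H"
    using mult_add_distrib_mat_vec[OF A] unfolding fix_space_def by auto
next
  fix c x assume "x \<in> fix_space n A H"
  then show "c \<cdot>\<^sub>v x \<in> fix_space n A H"
    using mult_mat_vec[OF A] unfolding fix_space_def by auto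
qed (use A mult_mat_zero_vec in \<open>auto simp: fix_space_def\<close>)

lemma smult_vec_cancel:
  assumes "(c :: 'a :: field) \<noteq> 0" "x \<in> carrier_vec n" "y \<in> carrier_vec n"
  shows "c \<cdot>\<^sub>v x = c \<cdot>\<^sub>v y \<longleftrightarrow> x = y"
  using assms by (metis smult_smult_assoc one_smult_vec field_class.field_inverse)

section \<open>Block vectors\<close>

definition block :: "nat \<Rightarrow> nat \<Rightarrow> 'a vec \<Rightarrow> 'a vec" where
  "block d i w = vec d (\<lambda>a. w $ (i * d + a))"

definition of_blocks :: "nat \<Rightarrow> nat \<Rightarrow> (nat \<Rightarrow> 'a vec) \<Rightarrow> 'a vec" where
  "of_blocks m d f = vec (m * d) (\<lambda>r. f (r div d) $ (r mod d))"

definition block_prod :: "nat \<Rightarrow> nat \<Rightarrow> (nat \<Rightarrow> 'a vec set) \<Rightarrow> 'a vec set" where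
  "block_prod m d S = {w \<in> carrier_vec (m * d). \<forall>i<m. block d i w \<in> S i}"

lemma block_carrier [simp]: "block d i w \<in> carrier_vec d"
  and dim_vec_block [simp]: "dim_vec (block d i w) = d"
  and index_block [simp]: "a < d \<Longrightarrow> block d i w $ a = w $ (i * d + a)"
  unfolding block_def by simp_all

lemma block_index_less:
  assumes "i < m" "a < d" shows "i * d + a < m * (d::nat)"
proof -
  have "i * d + a < Suc i * d" using assms(2) by simp
  also have "\<dots> \<le> m * d" using assms(1) by (intro mult_le_mono1) simp
  finally show ?thesis .
qed

lemma block_add:
  "w \<in> carrier_vec (m * d) \<Longrightarrow> v \<in> carrier_vec (m * d) \<Longrightarrow> i < m \<Longrightarrow>
    block d i (w + v) = block d i w + block d i v"
  by (intro eq_vecI) (auto simp: block_index_less)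

lemma block_smult: "w \<in> carrier_vec (m * d) \<Longrightarrow> i < m \<Longrightarrow> block d i (c \<cdot>\<^sub>v w) = c \<cdot>\<^sub>v block d i w"
  by (intro eq_vecI) (auto simp: block_index_less)

lemma block_zero: "i < m \<Longrightarrow> block d i (0\<^sub>v (m * d)) = 0\<^sub>v d"
  by (intro eq_vecI) (auto simp: block_index_less)

lemma eq_vec_blockI:
  assumes "w \<in> carrier_vec (m * d)" "v \<in> carrier_vec (m * d)"
    and "\<And>i. i < m \<Longrightarrow> block d i w = block d i v"
  shows "w = v"
proof (rule eq_vecI)
  fix r assume "r < dim_vec v"
  then have r: "r < m * d" using assms by simp
  then have "d > 0" by (cases d) auto
  then have "r div d < m" "r mod d < d" using r by (auto simp: less_mult_imp_div_less)
  moreover have "r = r div d * d + r mod d" by simp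
  ultimately show "w $ r = v $ r" using assms(3) by (metis index_block)
qed (use assms in simp)

lemma sum_block_decomp:
  fixes f :: "nat \<Rightarrow> 'a :: comm_monoid_add"
  shows "(\<Sum>r<m * d. f r) = (\<Sum>i<m. \<Sum>a<d. f (i * d + a))"
proof -
  have "(\<Sum>r<m * d. f r) = (\<Sum>i<m. sum f {i * d..<i * d + d})"
    using sum.nat_group[of f d m] by (simp add: lessThan_atLeast0)
  also have "\<dots> = (\<Sum>i<m. \<Sum>a<d. f (i * d + a))"
  proof (rule sum.cong[OF refl])
    fix i
    have "sum f {0 + i * d..<d + i * d} = (\<Sum>a\<in>{0..<d}. f (a + i * d))"
      by (rule sum.shift_bounds_nat_ivl)
    then show "sum f {i * d..<i * d + d} = (\<Sum>a<d. f (i * d + a))"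
      by (simp add: atLeast0LessThan add.commute)
  qed
  finally show ?thesis .
qed

lemma of_blocks_carrier [simp]: "of_blocks m d f \<in> carrier_vec (m * d)"
  and dim_vec_of_blocks [simp]: "dim_vec (of_blocks m d f) = m * d"
  unfolding of_blocks_def by simp_all

lemma block_of_blocks [simp]: "i < m \<Longrightarrow> f i \<in> carrier_vec d \<Longrightarrow> block d i (of_blocks m d f) = f i"
  by (intro eq_vecI) (auto simp: of_blocks_def block_index_less)

definition restrict_blocks :: "nat \<Rightarrow> nat \<Rightarrow> nat set \<Rightarrow> 'a :: zero vec \<Rightarrow> 'a vec" where
  "restrict_blocks m d R w = of_blocks m d (\<lambda>i. if i \<in> R then block d i w else 0\<^sub>v d)"

lemma block_restrict_blocks [simp]:
  "i < m \<Longrightarrow> block d i (restrict_blocks m d R w) = (if i \<in> R then block d i w else 0\<^sub>v d)"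
  unfolding restrict_blocks_def by simp

lemma restrict_blocks_carrier [simp]: "restrict_blocks m d R w \<in> carrier_vec (m * d)"
  unfolding restrict_blocks_def by simp

lemma restrict_blocks_add:
  fixes w v :: "'a :: monoid_add vec"
  assumes "w \<in> carrier_vec (m * d)" "v \<in> carrier_vec (m * d)"
  shows "restrict_blocks m d R (w + v) = restrict_blocks m d R w + restrict_blocks m d R v"
proof (rule eq_vec_blockI[of _ m d])
  fix i assume i: "i < m"
  show "block d i (restrict_blocks m d R (w + v)) = block d i (restrict_blocks m d R w + restrict_blocks m d R v)"
    using block_add[OF assms i] i
      block_add[OF restrict_blocks_carrier[of m d R w] restrict_blocks_carrier[of m d R v] i] by simp
qed (use assms in simp_all)

lemma restrict_blocks_smult:
  fixes w :: "'a :: semiring_0 vec"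
  assumes "w \<in> carrier_vec (m * d)"
  shows "restrict_blocks m d R (c \<cdot>\<^sub>v w) = c \<cdot>\<^sub>v restrict_blocks m d R w"
proof (rule eq_vec_blockI[of _ m d])
  fix i assume i: "i < m"
  show "block d i (restrict_blocks m d R (c \<cdot>\<^sub>v w)) = block d i (c \<cdot>\<^sub>v restrict_blocks m d R w)"
    using block_smult[OF assms i] block_smult[OF restrict_blocks_carrier[of m d R w] i] i
    by (auto intro!: eq_vecI)
qed (use assms in simp_all)

lemma real_subspace_block_prod:
  "(\<And>i. i < m \<Longrightarrow> real_subspace d (S i)) \<Longrightarrow> real_subspace (m * d) (block_prod m d S)"
  unfolding real_subspace_def block_prod_def by (auto simp: block_add block_smult block_zero)

lemma subspace_dim_block_prod_last_zero:
  assumes S: "\<And>i. i \<le> m \<Longrightarrow> real_subspace d (S i)"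
  shows "subspace_dim (Suc m * d) {w \<in> block_prod (Suc m) d S. block d m w = 0\<^sub>v d} =
    subspace_dim (m * d) (block_prod m d S)"
proof (rule subspace_dim_eq_of_inj_on)
  let ?K = "{w \<in> block_prod (Suc m) d S. block d m w = 0\<^sub>v d}" and ?B = "block_prod m d S"
  let ?restrict = "\<lambda>w. vec (m * d) (\<lambda>r. w $ r)"
  let ?extend = "\<lambda>v. vec (Suc m * d) (\<lambda>r. if r < m * d then v $ r else 0)"
  have zero: "0\<^sub>v d \<in> S i" if "i \<le> m" for i using S[OF that] unfolding real_subspace_def by auto
  have block_restrict: "block d i (?restrict w) = block d i w" if "i < m" for i w
    using that by (intro eq_vecI) (auto simp: block_index_less)
  have block_extend: "block d i (?extend v) = (if i < m then block d i v else 0\<^sub>v d)" if "i \<le> m" for i v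
    using that by (intro eq_vecI) (auto simp: block_index_less trans_less_add2 le_less)
  have "block d m (x + y) = block d m x + block d m y" "block d m (c \<cdot>\<^sub>v x) = c \<cdot>\<^sub>v block d m x"
    if "x \<in> ?K" "y \<in> ?K" for x y c
    using that block_add[of x "Suc m" d y m] block_smult[of x "Suc m" d m c] by (auto simp: block_prod_def)
  then show "real_subspace (Suc m * d) ?K"
    using real_subspace_block_prod[of "Suc m" d S] S block_zero[of m "Suc m" d]
    unfolding real_subspace_def by (auto intro!: eq_vecI)
  show "real_subspace (m * d) ?B" using real_subspace_block_prod S by simp
  show "linear_on ?K ?B ?restrict"
    by (rule linear_onI) (auto simp: block_prod_def block_restrict intro!: eq_vecI)
  show "linear_on ?B ?K ?extend"
  proof (rule linear_onI)
    fix v assume v: "v \<in> ?B"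
    have "block d i (?extend v) \<in> S i" if "i \<le> m" for i
      using block_extend[OF that, of v] v zero[OF that] that by (auto simp: block_prod_def)
    moreover have "block d m (?extend v) = 0\<^sub>v d" using block_extend[of m v] by simp
    ultimately show "?extend v \<in> ?K" by (auto simp: block_prod_def less_Suc_eq_le)
  qed (auto simp: block_prod_def intro!: eq_vecI)
  show "inj_on ?restrict ?K"
  proof (rule inj_onI, rule eq_vec_blockI)
    fix x y i assume x: "x \<in> ?K" and y: "y \<in> ?K" and eq: "?restrict x = ?restrict y" and i: "i < Suc m"
    show "block d i x = block d i y"
    proof (cases "i = m")
      case False
      then show ?thesis using i block_restrict[of i x] block_restrict[of i y] eq by simp
    qed (use x y in simp)
  qed (auto simp: block_prod_def)
  show "inj_on ?extend ?B"
  proof (rule inj_onI, rule eq_vec_blockI)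
    fix x y i assume "?extend x = ?extend y" and i: "i < m"
    then show "block d i x = block d i y" using block_extend[of i x] block_extend[of i y] by simp
  qed (auto simp: block_prod_def)
qed

lemma subspace_dim_block_prod_Suc:
  assumes S: "\<And>i. i \<le> m \<Longrightarrow> real_subspace d (S i)"
  shows "subspace_dim (Suc m * d) (block_prod (Suc m) d S) =
    subspace_dim d (S m) + subspace_dim (m * d) (block_prod m d S)"
proof -
  let ?A = "block_prod (Suc m) d S"
  have A: "real_subspace (Suc m * d) ?A"
    using real_subspace_block_prod[of "Suc m" d S] S by (simp add: less_Suc_eq_le)
  have "subspace_dim (Suc m * d) ?A =
      subspace_dim d (S m) + subspace_dim (Suc m * d) {w \<in> ?A. block d m w = 0\<^sub>v d}"
  proof (rule subspace_dim_rank_nullity[OF A S[OF order.refl]])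
    show "linear_on ?A (S m) (block d m)"
      by (rule linear_onI) (auto simp: block_prod_def block_add block_smult)
    show "block d m ` ?A = S m"
    proof (intro subset_antisym subsetI)
      fix x assume x: "x \<in> S m"
      let ?w = "of_blocks (Suc m) d (\<lambda>i. if i = m then x else 0\<^sub>v d)"
      have "x \<in> carrier_vec d" using x S[of m] unfolding real_subspace_def by auto
      moreover have "0\<^sub>v d \<in> S i" if "i \<le> m" for i using S[OF that] unfolding real_subspace_def by auto
      ultimately have "?w \<in> ?A" "block d m ?w = x"
        using x of_blocks_carrier[of "Suc m" d] by (auto simp: block_prod_def less_Suc_eq)
      then show "x \<in> block d m ` ?A" by (metis image_eqI)
    qed (auto simp: block_prod_def)
  qed
  then show ?thesis using subspace_dim_block_prod_last_zero[OF S] by simp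
qed

lemma subspace_dim_block_prod:
  "(\<And>i. i < m \<Longrightarrow> real_subspace d (S i)) \<Longrightarrow>
    subspace_dim (m * d) (block_prod m d S) = (\<Sum>i<m. subspace_dim d (S i))"
proof (induction m)
  case 0
  have "block_prod 0 d S = {0\<^sub>v 0}" unfolding block_prod_def by auto
  then show ?case using subspace_dim_zero[of 0] by simp
next
  case (Suc m)
  then show ?case using subspace_dim_block_prod_Suc[of m d S] by simp
qed

lemma subspace_dim_block_prod_on:
  assumes R: "R \<subseteq> {..<m}" and S: "\<And>i. i \<in> R \<Longrightarrow> real_subspace d (S i)"
  shows "subspace_dim (m * d) (block_prod m d (\<lambda>i. if i \<in> R then S i else {0\<^sub>v d})) =
    (\<Sum>i\<in>R. subspace_dim d (S i))"
proof -
  have "subspace_dim (m * d) (block_prod m d (\<lambda>i. if i \<in> R then S i else {0\<^sub>v d})) =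
      (\<Sum>i<m. if i \<in> R then subspace_dim d (S i) else 0)"
    using S real_subspace_zero subspace_dim_zero
    by (subst subspace_dim_block_prod) (auto intro: sum.cong)
  also have "\<dots> = (\<Sum>i\<in>R. subspace_dim d (S i))"
    using R by (simp add: sum.If_cases Int_absorb1)
  finally show ?thesis .
qed

section \<open>Subgroups of prime power order and pseudocyclic subgroups\<close>

lemma (in group) subgroup_eq_powers_of_least_power:
  assumes x: "x \<in> carrier G" and S: "subgroup S G" and Sx: "S \<subseteq> range (\<lambda>n::int. x [^] n)"
    and n0: "n0 > 0" "x [^] int n0 \<in> S"
    and least: "\<And>k::nat. k > 0 \<Longrightarrow> x [^] int k \<in> S \<Longrightarrow> n0 \<le> k"
  shows "S = range (\<lambda>j::int. (x [^] int n0) [^] j)"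
proof
  let ?y = "x [^] int n0"
  show "range (\<lambda>j::int. ?y [^] j) \<subseteq> S" using subgroup_int_pow_closed[OF S n0(2)] by auto
  show "S \<subseteq> range (\<lambda>j::int. ?y [^] j)"
  proof
    fix s assume s: "s \<in> S"
    then obtain n :: int where n: "s = x [^] n" using Sx by blast
    define q where "q = n div int n0"
    define r where "r = n mod int n0"
    have r: "0 \<le> r" "r < int n0" unfolding r_def using n0 by auto
    have "s = x [^] (int n0 * q + r)" unfolding n q_def r_def by simp
    also have "\<dots> = ?y [^] q \<otimes> x [^] r" using x by (simp add: int_pow_mult int_pow_pow)
    finally have s_eq: "s = ?y [^] q \<otimes> x [^] r" .
    then have "x [^] r = inv (?y [^] q) \<otimes> s" using s x S
      by (metis int_pow_closed inv_solve_left subgroup.mem_carrier)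
    then have "x [^] int (nat r) \<in> S"
      using s r subgroup_int_pow_closed[OF S n0(2)] subgroup.m_inv_closed[OF S] subgroup.m_closed[OF S]
      by simp
    then have "r = 0" using least[of "nat r"] r by linarith
    then show "s \<in> range (\<lambda>j::int. ?y [^] j)" using s_eq x by simp
  qed
qed

lemma (in group) cyclic_group_subgroup:
  assumes cyc: "cyclic_group G" and S: "subgroup S G"
  shows "cyclic_group (G\<lparr>carrier := S\<rparr>)"
proof -
  interpret GS: group "G\<lparr>carrier := S\<rparr>" using subgroup_imp_group[OF S] .
  obtain x where x: "x \<in> carrier G" and G_eq: "carrier G = range (\<lambda>n::int. x [^] n)"
    using cyc cyclic_group by blast
  have Sx: "S \<subseteq> range (\<lambda>n::int. x [^] n)" using subgroup.subset[OF S] G_eq by simp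
  show ?thesis
  proof (cases "\<exists>n::nat. n > 0 \<and> x [^] int n \<in> S")
    case False
    have "S = {\<one>}"
    proof
      show "S \<subseteq> {\<one>}"
      proof
        fix s assume s: "s \<in> S"
        then obtain n :: int where n: "s = x [^] n" using Sx by blast
        have "x [^] (- n) \<in> S" using s n subgroup.m_inv_closed[OF S s] int_pow_neg[OF x] by simp
        then have "n = 0" using False s n
          by (metis neg_0_less_iff_less not_less_iff_gr_or_eq zero_less_imp_eq_int)
        then show "s \<in> {\<one>}" using n by simp
      qed
    qed (use subgroup.one_closed[OF S] in simp)
    then have "trivial_group (G\<lparr>carrier := S\<rparr>)"
      unfolding trivial_group_def using GS.is_group by simp
    then show ?thesis by (rule trivial_imp_cyclic_group)
  next
    case True
    define n0 where "n0 = (LEAST n::nat. n > 0 \<and> x [^] int n \<in> S)"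
    have n0: "n0 > 0" "x [^] int n0 \<in> S" using LeastI_ex[OF True] unfolding n0_def by auto
    have "k > 0 \<Longrightarrow> x [^] int k \<in> S \<Longrightarrow> n0 \<le> k" for k unfolding n0_def by (rule Least_le) simp
    then have "S = range (\<lambda>j::int. (x [^] int n0) [^]\<^bsub>G\<lparr>carrier := S\<rparr>\<^esub> j)"
      using subgroup_eq_powers_of_least_power[OF x S Sx n0] int_pow_consistent[OF S n0(2)] by simp
    then show ?thesis using GS.cyclic_group n0(2) by auto
  qed
qed

lemma (in group) card_subgroup_dvd:
  assumes I: "subgroup I G" and J: "subgroup J G" and IJ: "I \<subseteq> J"
  shows "card I dvd card J"
proof -
  interpret GJ: group "G\<lparr>carrier := J\<rparr>" using subgroup_imp_group[OF J] .
  have "subgroup I (G\<lparr>carrier := J\<rparr>)" using subgroup_incl[OF I J IJ] .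
  from GJ.lagrange[OF this] have "card (rcosets\<^bsub>G\<lparr>carrier := J\<rparr>\<^esub> I) * card I = card J"
    unfolding Coset.order_def by simp
  then show ?thesis by (metis dvd_triv_right)
qed

lemma (in group) prime_power_order_subgroup:
  assumes "prime_power_order P" "subgroup P G" "subgroup P' G" "P' \<subseteq> P"
  shows "prime_power_order P'"
proof -
  obtain p k where pk: "prime (p::nat)" "card P = p ^ k" using assms(1) unfolding prime_power_order_def by blast
  have "card P' dvd p ^ k" using card_subgroup_dvd[OF assms(3,2,4)] pk by simp
  then obtain i where "card P' = p ^ i" using divides_primepow_nat[OF pk(1)] by blast
  then show ?thesis unfolding prime_power_order_def using pk(1) by blast
qed

text \<open>Second isomorphism theorem: \<open>L / (P \<inter> L) \<cong> P L / P\<close>, a subgroup of \<open>G / P\<close>.\<close>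

lemma (in group) cyclic_quotient_Int_subgroup:
  assumes P: "P \<lhd> G" and cyc: "cyclic_group (G Mod P)" and L: "subgroup L G"
  shows "cyclic_group ((G\<lparr>carrier := L\<rparr>) Mod (P \<inter> L))"
proof -
  interpret second_isomorphism_grp P G L
    using P L by (simp add: second_isomorphism_grp_def second_isomorphism_grp_axioms_def)
  let ?S = "P <#> L"
  have S: "subgroup ?S G" and PS: "P \<subseteq> ?S" using normal_set_mult_subgroup H_contained_in_set_mult .
  have "cyclic_group ((G Mod P)\<lparr>carrier := rcosets\<^bsub>G\<lparr>carrier := ?S\<rparr>\<^esub> P\<rparr>)"
    using group.cyclic_group_subgroup[OF normal.factorgroup_is_group[OF P] cyc
        normal_subgroup_factorize[OF P PS S]] .
  moreover have "(G Mod P)\<lparr>carrier := rcosets\<^bsub>G\<lparr>carrier := ?S\<rparr>\<^esub> P\<rparr> = (G\<lparr>carrier := ?S\<rparr>) Mod P"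
  proof -
    have "(<#>\<^bsub>G\<^esub>) = (<#>\<^bsub>G\<lparr>carrier := ?S\<rparr>\<^esub>)" by (intro ext) (simp add: set_mult_def)
    then show ?thesis unfolding FactGroup_def by simp
  qed
  moreover have "(G\<lparr>carrier := L\<rparr>) Mod (P \<inter> L) \<cong> (G\<lparr>carrier := ?S\<rparr>) Mod P"
    unfolding is_iso_def using normal_intersection_quotient_isom by blast
  ultimately show ?thesis
    using isomorphic_group_cyclicity normal.factorgroup_is_group[OF normal_Int_subgroup[OF L P]]
      normal.factorgroup_is_group[OF normal_restrict_supergroup[OF S P PS]] by metis
qed

lemma (in group) pseudocyclic_Int_normal:
  assumes N: "N \<lhd> G" and pc: "pseudocyclic G K"
  shows "pseudocyclic G (K \<inter> N)"
proof -
  have K: "subgroup K G" using pc unfolding pseudocyclic_def by blast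
  obtain p k P where p: "prime (p::nat)" and PK: "P \<lhd> G\<lparr>carrier := K\<rparr>" and card_P: "card P = p ^ k"
    and cyc: "cyclic_group ((G\<lparr>carrier := K\<rparr>) Mod P)"
    using pc unfolding pseudocyclic_def by blast
  interpret GK: group "G\<lparr>carrier := K\<rparr>" using subgroup_imp_group[OF K] .
  have P: "subgroup P G" and "P \<subseteq> K"
    using incl_subgroup[OF K normal_imp_subgroup[OF PK]] subgroup.subset[OF normal_imp_subgroup[OF PK]] by auto
  then have eq: "P \<inter> (K \<inter> N) = P \<inter> N" by blast
  have KN: "subgroup (K \<inter> N) G" using subgroups_Inter_pair[OF K normal_imp_subgroup[OF N]] .
  have "cyclic_group ((G\<lparr>carrier := K \<inter> N\<rparr>) Mod (P \<inter> N))"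
    using GK.cyclic_quotient_Int_subgroup[OF PK cyc subgroup_incl[OF KN K]] unfolding eq by simp
  moreover have "P \<inter> N \<lhd> G\<lparr>carrier := K \<inter> N\<rparr>" using normal_inter[OF K normal_imp_subgroup[OF N] PK] .
  moreover have "card (P \<inter> N) dvd p ^ k"
    using card_subgroup_dvd[OF subgroups_Inter_pair[OF P normal_imp_subgroup[OF N]] P] card_P by auto
  then obtain k' where "card (P \<inter> N) = p ^ k'" using divides_primepow_nat[OF p] by blast
  ultimately show ?thesis unfolding pseudocyclic_def using KN p by blast
qed

section \<open>The induced representation\<close>

locale induced_rep = normal N G for N and G (structure) +
  fixes d :: nat and \<rho> :: "'a \<Rightarrow> real mat"
  assumes finite_carrier: "finite (carrier G)" and rep: "is_rep G N d \<rho>"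
begin

lemma left_transversal_exists: "\<exists>ts. is_left_transversal G N ts"
proof -
  have "finite (lcosets N)" using finite_carrier unfolding LCOSETS_def by simp
  then obtain Cs where Cs: "set Cs = lcosets N" "distinct Cs" by (meson finite_distinct_list)
  define rep where "rep C = (SOME g. g \<in> C)" for C :: "'a set"
  have rep: "rep C \<in> carrier G \<and> C = rep C <# N" if "C \<in> lcosets N" for C
  proof -
    have "\<exists>a\<in>carrier G. C = a <# N" using that unfolding LCOSETS_def by blast
    then obtain a where a: "a \<in> carrier G" "C = a <# N" by blast
    have "rep C \<in> a <# N" unfolding rep_def a(2) using lcos_self[OF a(1) is_subgroup] by (rule someI)
    then show ?thesis
      using l_repr_independence[OF _ a(1) is_subgroup] l_coset_subset_G[OF subset a(1)] a(2) by auto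
  qed
  have ex1: "\<exists>!i. i < length Cs \<and> g \<in> Cs ! i" if g: "g \<in> carrier G" for g
  proof -
    have "g <# N \<in> set Cs" using g Cs(1) unfolding LCOSETS_def by blast
    then obtain i where i: "i < length Cs" "Cs ! i = g <# N" by (auto simp: in_set_conv_nth)
    moreover have "j = i" if j: "j < length Cs" "g \<in> Cs ! j" for j
    proof -
      have "Cs ! j \<inter> Cs ! i \<noteq> {}" using i j lcos_self[OF g is_subgroup] by auto
      then have "Cs ! j = Cs ! i"
        using lcos_disjoint[OF is_subgroup] i(1) j(1) Cs(1) nth_mem by metis
      then show ?thesis using Cs(2) i(1) j(1) nth_eq_iff_index_eq by blast
    qed
    ultimately show ?thesis using lcos_self[OF g is_subgroup] by blast
  qed
  have "i < length Cs \<and> g \<in> map rep Cs ! i <# N \<longleftrightarrow> i < length Cs \<and> g \<in> Cs ! i" for i g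
    using rep[of "Cs ! i"] Cs(1) nth_mem by fastforce
  then have "is_left_transversal G N (map rep Cs)"
    using ex1 rep Cs(1) unfolding is_left_transversal_def length_map by auto
  then show ?thesis ..
qed

definition m :: nat where "m = length (left_transversal G N)"

definition t :: "nat \<Rightarrow> 'a" where "t i = left_transversal G N ! i"

lemma is_left_transversal: "is_left_transversal G N (left_transversal G N)"
  unfolding left_transversal_def using left_transversal_exists by (rule someI_ex)

lemma t_carrier [simp]: "i < m \<Longrightarrow> t i \<in> carrier G"
  using is_left_transversal unfolding is_left_transversal_def t_def m_def by (auto simp: nth_mem subset_iff)

lemma in_t_coset_iff:
  assumes "i < m" "g \<in> carrier G" shows "g \<in> t i <# N \<longleftrightarrow> inv (t i) \<otimes> g \<in> N"
  using lcos_module_imp[OF is_group] lcos_module_rev[OF is_group] assms t_carrier by blast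

lemma ex1_coset_index:
  assumes g: "g \<in> carrier G" shows "\<exists>!i. i < m \<and> inv (t i) \<otimes> g \<in> N"
proof -
  have "\<exists>!i. i < m \<and> g \<in> t i <# N"
    using is_left_transversal g unfolding is_left_transversal_def t_def m_def by simp
  moreover have "i < m \<and> g \<in> t i <# N \<longleftrightarrow> i < m \<and> inv (t i) \<otimes> g \<in> N" for i
    using in_t_coset_iff g by blast
  ultimately show ?thesis by simp
qed

lemma exists_t_in_N: "\<exists>i<m. t i \<in> N"
proof -
  obtain i where i: "i < m" "inv (t i) \<otimes> \<one> \<in> N" using ex1_coset_index[OF one_closed] by blast
  then have "inv (t i) \<in> N" by simp
  then have "inv (inv (t i)) \<in> N" by (rule m_inv_closed)
  then show ?thesis using i(1) by auto
qed

text \<open>Row \<open>i\<close> of the block matrix \<open>Ind g\<close> has exactly one nonzero block, namely in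
  column \<open>\<sigma> g i\<close>, and that block is \<open>\<rho> (tconj i g (\<sigma> g i))\<close>.\<close>

definition tconj :: "nat \<Rightarrow> 'a \<Rightarrow> nat \<Rightarrow> 'a" where
  "tconj i g j = inv (t i) \<otimes> g \<otimes> t j"

definition \<sigma> :: "'a \<Rightarrow> nat \<Rightarrow> nat" where
  "\<sigma> g i = (THE j. j < m \<and> tconj i g j \<in> N)"

lemma tconj_carrier [simp]: "i < m \<Longrightarrow> j < m \<Longrightarrow> g \<in> carrier G \<Longrightarrow> tconj i g j \<in> carrier G"
  unfolding tconj_def by simp

lemma tconj_mult:
  assumes "i < m" "j < m" "k < m" "g \<in> carrier G" "h \<in> carrier G"
  shows "tconj i g j \<otimes> tconj j h k = tconj i (g \<otimes> h) k"
  using assms unfolding tconj_def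
  by (simp add: m_assoc) (metis assms(2) inv_closed l_one m_assoc m_closed r_inv t_carrier)

lemma inv_mem_iff: "x \<in> carrier G \<Longrightarrow> inv x \<in> N \<longleftrightarrow> x \<in> N"
  by (metis inv_inv m_inv_closed)

lemma ex1_\<sigma>:
  assumes g: "g \<in> carrier G" and i: "i < m" shows "\<exists>!j. j < m \<and> tconj i g j \<in> N"
proof -
  have "inv (inv (t j) \<otimes> (inv g \<otimes> t i)) = tconj i g j" if "j < m" for j
    unfolding tconj_def using g i that by (simp add: inv_mult_group m_assoc)
  then have "inv (t j) \<otimes> (inv g \<otimes> t i) \<in> N \<longleftrightarrow> tconj i g j \<in> N" if "j < m" for j
    using inv_mem_iff g i that by (metis inv_closed m_closed t_carrier)
  then show ?thesis using ex1_coset_index[of "inv g \<otimes> t i"] g i by auto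
qed

lemma \<sigma>_less: "g \<in> carrier G \<Longrightarrow> i < m \<Longrightarrow> \<sigma> g i < m"
  and tconj_\<sigma>_mem: "g \<in> carrier G \<Longrightarrow> i < m \<Longrightarrow> tconj i g (\<sigma> g i) \<in> N"
  using theI'[OF ex1_\<sigma>] unfolding \<sigma>_def by auto

lemma \<sigma>_eqI: "g \<in> carrier G \<Longrightarrow> i < m \<Longrightarrow> j < m \<Longrightarrow> tconj i g j \<in> N \<Longrightarrow> \<sigma> g i = j"
  using ex1_\<sigma> \<sigma>_less tconj_\<sigma>_mem by blast

lemma \<sigma>_one: "i < m \<Longrightarrow> \<sigma> \<one> i = i"
  by (rule \<sigma>_eqI) (auto simp: tconj_def)

lemma \<sigma>_mult:
  assumes g: "g \<in> carrier G" and h: "h \<in> carrier G" and i: "i < m"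
  shows "\<sigma> (g \<otimes> h) i = \<sigma> h (\<sigma> g i)"
proof (rule \<sigma>_eqI)
  show "tconj i (g \<otimes> h) (\<sigma> h (\<sigma> g i)) \<in> N"
    using tconj_mult[OF i \<sigma>_less[OF g i] \<sigma>_less[OF h \<sigma>_less[OF g i]] g h, symmetric]
      tconj_\<sigma>_mem[OF g i] tconj_\<sigma>_mem[OF h \<sigma>_less[OF g i]] by simp
qed (use assms \<sigma>_less in auto)

lemma \<sigma>_inv: "g \<in> carrier G \<Longrightarrow> i < m \<Longrightarrow> \<sigma> (inv g) (\<sigma> g i) = i"
  using \<sigma>_mult[of g "inv g" i] \<sigma>_one by simp

lemma \<sigma>_eq_self_iff:
  assumes g: "g \<in> carrier G" and i: "i < m" shows "\<sigma> g i = i \<longleftrightarrow> g \<in> N"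
proof -
  have "t i \<otimes> tconj i g i \<otimes> inv (t i) = g"
    unfolding tconj_def using g i by (simp add: m_assoc[symmetric]) (simp add: m_assoc)
  then have "tconj i g i \<in> N \<longleftrightarrow> g \<in> N"
    using inv_op_closed1[of "t i" g] inv_op_closed2[of "t i" "tconj i g i"] g i
    unfolding tconj_def by auto
  then show ?thesis using \<sigma>_eqI[OF g i i] tconj_\<sigma>_mem[OF g i] by auto
qed

lemma rho_carrier [simp]: "x \<in> N \<Longrightarrow> \<rho> x \<in> carrier_mat d d"
  and rho_one: "\<rho> \<one> = 1\<^sub>m d"
  and rho_mult: "x \<in> N \<Longrightarrow> y \<in> N \<Longrightarrow> \<rho> (x \<otimes> y) = \<rho> x * \<rho> y"
  using rep unfolding is_rep_def by auto

lemma dim_row_rho [simp]: "x \<in> N \<Longrightarrow> dim_row (\<rho> x) = d"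
  and dim_col_rho [simp]: "x \<in> N \<Longrightarrow> dim_col (\<rho> x) = d"
  using rho_carrier by (auto simp del: rho_carrier)

lemma rho_inv_cancel:
  assumes x: "x \<in> N" and v: "v \<in> carrier_vec d"
  shows "\<rho> x *\<^sub>v (\<rho> (inv x) *\<^sub>v v) = v" "\<rho> (inv x) *\<^sub>v (\<rho> x *\<^sub>v v) = v"
proof -
  have ix: "inv x \<in> N" using x by simp
  have "\<rho> x * \<rho> (inv x) = 1\<^sub>m d" "\<rho> (inv x) * \<rho> x = 1\<^sub>m d"
    using rho_mult[OF x ix] rho_mult[OF ix x] rho_one x by auto
  then show "\<rho> x *\<^sub>v (\<rho> (inv x) *\<^sub>v v) = v" "\<rho> (inv x) *\<^sub>v (\<rho> x *\<^sub>v v) = v"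
    using assoc_mult_mat_vec[OF rho_carrier[OF x] rho_carrier[OF ix] v]
      assoc_mult_mat_vec[OF rho_carrier[OF ix] rho_carrier[OF x] v] v by auto
qed

abbreviation Ind :: "'a \<Rightarrow> real mat" where "Ind \<equiv> ind_rep G N d \<rho>"

lemma ind_deg_eq: "ind_deg G N d = m * d"
  unfolding ind_deg_def m_def ..

lemma Ind_carrier [simp]: "Ind g \<in> carrier_mat (m * d) (m * d)"
  unfolding ind_rep_def Let_def ind_deg_eq by simp

lemma dim_row_Ind [simp]: "dim_row (Ind g) = m * d"
  and dim_col_Ind [simp]: "dim_col (Ind g) = m * d"
  using Ind_carrier by (auto simp del: Ind_carrier)

lemma Ind_mult_vec_carrier [simp]: "Ind g *\<^sub>v w \<in> carrier_vec (m * d)"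
  by (simp add: carrier_vecI)

lemma Ind_entry:
  "r < m * d \<Longrightarrow> c < m * d \<Longrightarrow> Ind g $$ (r, c) =
    (let x = tconj (r div d) g (c div d) in if x \<in> N then \<rho> x $$ (r mod d, c mod d) else 0)"
  unfolding ind_rep_def Let_def ind_deg_eq tconj_def t_def by simp

lemma block_Ind_mult_vec:
  assumes g: "g \<in> carrier G" and w: "w \<in> carrier_vec (m * d)" and i: "i < m"
  shows "block d i (Ind g *\<^sub>v w) = \<rho> (tconj i g (\<sigma> g i)) *\<^sub>v block d (\<sigma> g i) w"
proof (rule eq_vecI)
  define j where "j = \<sigma> g i"
  define x where "x = tconj i g j"
  have j: "j < m" "x \<in> N" using \<sigma>_less[OF g i] tconj_\<sigma>_mem[OF g i] unfolding j_def x_def by auto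
  fix a assume "a < dim_vec (\<rho> (tconj i g (\<sigma> g i)) *\<^sub>v block d (\<sigma> g i) w)"
  then have a: "a < d" using j unfolding j_def x_def by simp
  have entry: "Ind g $$ (i * d + a, k * d + b) * w $ (k * d + b) =
      (if k = j then \<rho> x $$ (a, b) * block d j w $ b else 0)" if k: "k < m" and b: "b < d" for k b
  proof -
    have "(i * d + a) div d = i" "(i * d + a) mod d = a" "(k * d + b) div d = k" "(k * d + b) mod d = b"
      using a b by auto
    moreover have "tconj i g k \<in> N \<longleftrightarrow> k = j"
      using \<sigma>_eqI[OF g i k] j unfolding j_def x_def by auto
    ultimately show ?thesis
      using Ind_entry[OF block_index_less[OF i a] block_index_less[OF k b]] b
      unfolding x_def by (simp add: Let_def)
  qed
  have "block d i (Ind g *\<^sub>v w) $ a = (\<Sum>r\<in>{0..<m * d}. Ind g $$ (i * d + a, r) * w $ r)"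
    using a w block_index_less[OF i a] by (simp add: scalar_prod_def)
  also have "\<dots> = (\<Sum>k<m. \<Sum>b<d. Ind g $$ (i * d + a, k * d + b) * w $ (k * d + b))"
    unfolding atLeast0LessThan by (rule sum_block_decomp)
  also have "\<dots> = (\<Sum>k<m. if k = j then \<Sum>b<d. \<rho> x $$ (a, b) * block d j w $ b else 0)"
    using entry by (intro sum.cong refl) auto
  also have "\<dots> = (\<rho> x *\<^sub>v block d j w) $ a"
    using a j by (simp add: scalar_prod_def atLeast0LessThan)
  finally show "block d i (Ind g *\<^sub>v w) $ a = (\<rho> (tconj i g (\<sigma> g i)) *\<^sub>v block d (\<sigma> g i) w) $ a"
    unfolding j_def x_def .
qed (use \<sigma>_less[OF g i] tconj_\<sigma>_mem[OF g i] in simp)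

lemma Ind_mult_mult_vec:
  assumes g: "g \<in> carrier G" and h: "h \<in> carrier G" and w: "w \<in> carrier_vec (m * d)"
  shows "Ind (g \<otimes> h) *\<^sub>v w = Ind g *\<^sub>v (Ind h *\<^sub>v w)"
proof (rule eq_vec_blockI[of _ m d])
  fix i assume i: "i < m"
  define j where "j = \<sigma> g i"
  have j: "j < m" "tconj i g j \<in> N" using \<sigma>_less[OF g i] tconj_\<sigma>_mem[OF g i] unfolding j_def by auto
  have k: "\<sigma> h j < m" "tconj j h (\<sigma> h j) \<in> N" using \<sigma>_less[OF h j(1)] tconj_\<sigma>_mem[OF h j(1)] by auto
  have "block d i (Ind (g \<otimes> h) *\<^sub>v w) = \<rho> (tconj i g j \<otimes> tconj j h (\<sigma> h j)) *\<^sub>v block d (\<sigma> h j) w"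
    using block_Ind_mult_vec[OF m_closed[OF g h] w i] \<sigma>_mult[OF g h i] tconj_mult[OF i j(1) k(1) g h]
    unfolding j_def by simp
  also have "\<dots> = \<rho> (tconj i g j) *\<^sub>v (\<rho> (tconj j h (\<sigma> h j)) *\<^sub>v block d (\<sigma> h j) w)"
    using rho_mult[OF j(2) k(2)] assoc_mult_mat_vec[OF rho_carrier[OF j(2)] rho_carrier[OF k(2)]] by simp
  also have "\<dots> = block d i (Ind g *\<^sub>v (Ind h *\<^sub>v w))"
    using block_Ind_mult_vec[OF g _ i] block_Ind_mult_vec[OF h w j(1)] unfolding j_def by simp
  finally show "block d i (Ind (g \<otimes> h) *\<^sub>v w) = block d i (Ind g *\<^sub>v (Ind h *\<^sub>v w))" .
qed (use w in auto)

end

section \<open>Fixed points of the induced representation: dimension bounds\<close>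

context induced_rep
begin

lemma real_subspace_fix_space_rho: "K \<subseteq> N \<Longrightarrow> real_subspace d (fix_space d \<rho> K)"
  by (rule real_subspace_fix_space) auto

lemma real_subspace_fix_space_Ind: "real_subspace (m * d) (fix_space (m * d) Ind H)"
  by (rule real_subspace_fix_space) simp

definition tconj_set :: "nat \<Rightarrow> 'a set \<Rightarrow> 'a set" where
  "tconj_set i K = (\<lambda>k. tconj i k i) ` K"

lemma tconj_set_subset: "i < m \<Longrightarrow> K \<subseteq> N \<Longrightarrow> tconj_set i K \<subseteq> N"
  unfolding tconj_set_def tconj_def using inv_op_closed1 by auto

definition in_orbit :: "'a set \<Rightarrow> nat \<Rightarrow> nat \<Rightarrow> bool" where
  "in_orbit H i j \<longleftrightarrow> (\<exists>h\<in>H. \<sigma> h i = j)"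

lemma block_fix_space_Ind:
  assumes w: "w \<in> fix_space (m * d) Ind H" and H: "H \<subseteq> carrier G" and h: "h \<in> H" and i: "i < m"
  shows "block d i w = \<rho> (tconj i h (\<sigma> h i)) *\<^sub>v block d (\<sigma> h i) w"
proof -
  have "Ind h *\<^sub>v w = w" "w \<in> carrier_vec (m * d)" using w h unfolding fix_space_def by auto
  then show ?thesis using block_Ind_mult_vec[of h w i] h H i by auto
qed

lemma fix_dim_Ind_le:
  assumes H: "H \<subseteq> carrier G" and R: "R \<subseteq> {..<m}"
    and cover: "\<And>i. i < m \<Longrightarrow> \<exists>j\<in>R. in_orbit H i j"
  shows "fix_dim (m * d) Ind H \<le> (\<Sum>i\<in>R. fix_dim d \<rho> (tconj_set i (H \<inter> N)))"
proof -
  let ?W = "fix_space (m * d) Ind H" and ?\<Phi> = "restrict_blocks m d R"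
  define S where "S i = (if i \<in> R then fix_space d \<rho> (tconj_set i (H \<inter> N)) else {0\<^sub>v d})" for i
  have S: "real_subspace d (S i)" if "i < m" for i
    unfolding S_def using real_subspace_fix_space_rho[OF tconj_set_subset[OF that]] real_subspace_zero
    by auto
  have W: "w \<in> carrier_vec (m * d)" if "w \<in> ?W" for w using that unfolding fix_space_def by auto
  have "linear_on ?W (block_prod m d S) ?\<Phi>"
  proof (rule linear_onI)
    fix w assume w: "w \<in> ?W"
    have "block d i w \<in> fix_space d \<rho> (tconj_set i (H \<inter> N))" if i: "i < m" for i
    proof -
      have "\<rho> (tconj i k i) *\<^sub>v block d i w = block d i w" if "k \<in> H" "k \<in> N" for k
        using block_fix_space_Ind[OF w H that(1) i] \<sigma>_eq_self_iff[of k i] that H i by auto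
      then show ?thesis unfolding fix_space_def tconj_set_def by auto
    qed
    then show "?\<Phi> w \<in> block_prod m d S" unfolding block_prod_def S_def by simp
  qed (simp_all add: W restrict_blocks_add restrict_blocks_smult)
  moreover have "inj_on ?\<Phi> ?W"
  proof (rule inj_onI, rule eq_vec_blockI[of _ m d])
    fix x y i assume x: "x \<in> ?W" and y: "y \<in> ?W" and eq: "?\<Phi> x = ?\<Phi> y" and i: "i < m"
    obtain h where h: "h \<in> H" "\<sigma> h i \<in> R" using cover[OF i] unfolding in_orbit_def by blast
    then have "block d (\<sigma> h i) x = block d (\<sigma> h i) y"
      using arg_cong[OF eq, of "block d (\<sigma> h i)"] R by auto
    then show "block d i x = block d i y"
      using block_fix_space_Ind[OF x H h(1) i] block_fix_space_Ind[OF y H h(1) i] by simp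
  qed (use W in auto)
  ultimately have "fix_dim (m * d) Ind H \<le> subspace_dim (m * d) (block_prod m d S)"
    unfolding fix_dim_eq_subspace_dim
    by (intro subspace_dim_le_of_inj_on real_subspace_fix_space_Ind real_subspace_block_prod S)
  also have "\<dots> = (\<Sum>i\<in>R. fix_dim d \<rho> (tconj_set i (H \<inter> N)))"
    unfolding S_def fix_dim_eq_subspace_dim using R
    by (intro subspace_dim_block_prod_on real_subspace_fix_space_rho tconj_set_subset) auto
  finally show ?thesis .
qed

definition orbit_sum :: "'a set \<Rightarrow> real vec \<Rightarrow> real vec" where
  "orbit_sum P u = vec (m * d) (\<lambda>r. \<Sum>p\<in>P. (Ind p *\<^sub>v u) $ r)"

lemma orbit_sum_carrier [simp]: "orbit_sum P u \<in> carrier_vec (m * d)"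
  and dim_vec_orbit_sum [simp]: "dim_vec (orbit_sum P u) = m * d"
  unfolding orbit_sum_def by simp_all

lemma Ind_mult_orbit_sum:
  assumes P: "subgroup P G" and q: "q \<in> P" and u: "u \<in> carrier_vec (m * d)"
  shows "Ind q *\<^sub>v orbit_sum P u = orbit_sum P u"
proof (rule eq_vecI)
  fix r assume "r < dim_vec (orbit_sum P u)"
  then have r: "r < m * d" by simp
  have Pc: "P \<subseteq> carrier G" using subgroup.subset[OF P] .
  have qc: "q \<in> carrier G" using q Pc by auto
  have "(Ind q *\<^sub>v orbit_sum P u) $ r = (\<Sum>p\<in>P. (Ind q *\<^sub>v (Ind p *\<^sub>v u)) $ r)"
    using r u by (simp add: scalar_prod_def orbit_sum_def sum_distrib_left sum.swap[of _ P])
  also have "\<dots> = (\<Sum>p\<in>P. (Ind (q \<otimes> p) *\<^sub>v u) $ r)"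
    using Ind_mult_mult_vec[OF qc _ u] Pc by (intro sum.cong) auto
  also have "\<dots> = (\<Sum>p\<in>P. (Ind p *\<^sub>v u) $ r)"
    using subgroup.m_closed[OF P q] subgroup.m_inv_closed[OF P q] subgroup.m_closed[OF P] Pc qc
    by (intro sum.reindex_bij_witness[where i="\<lambda>p. inv q \<otimes> p" and j="\<lambda>p. q \<otimes> p"])
      (auto simp: m_assoc[symmetric])
  finally show "(Ind q *\<^sub>v orbit_sum P u) $ r = orbit_sum P u $ r"
    using r by (simp add: orbit_sum_def)
qed simp

lemma block_orbit_sum:
  assumes P: "P \<subseteq> carrier G" and u: "u \<in> carrier_vec (m * d)" and j: "j < m" and a: "a < d"
  shows "block d j (orbit_sum P u) $ a = (\<Sum>p\<in>P. (\<rho> (tconj j p (\<sigma> p j)) *\<^sub>v block d (\<sigma> p j) u) $ a)"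
proof -
  have "block d j (orbit_sum P u) $ a = (\<Sum>p\<in>P. block d j (Ind p *\<^sub>v u) $ a)"
    using a block_index_less[OF j a] by (simp add: orbit_sum_def)
  also have "\<dots> = (\<Sum>p\<in>P. (\<rho> (tconj j p (\<sigma> p j)) *\<^sub>v block d (\<sigma> p j) u) $ a)"
    using block_Ind_mult_vec[OF _ u j] P by (intro sum.cong) auto
  finally show ?thesis .
qed

lemma orbit_sum_add:
  "u \<in> carrier_vec (m * d) \<Longrightarrow> v \<in> carrier_vec (m * d) \<Longrightarrow> orbit_sum P (u + v) = orbit_sum P u + orbit_sum P v"
  unfolding orbit_sum_def
  by (intro eq_vecI) (auto simp: mult_add_distrib_mat_vec[OF Ind_carrier] sum.distrib)

lemma orbit_sum_smult: "u \<in> carrier_vec (m * d) \<Longrightarrow> orbit_sum P (c \<cdot>\<^sub>v u) = c \<cdot>\<^sub>v orbit_sum P u"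
  unfolding orbit_sum_def
  by (intro eq_vecI) (auto simp: mult_mat_vec[OF Ind_carrier] sum_distrib_left)

lemma card_Int_N_pos:
  assumes "subgroup P G" shows "card (P \<inter> N) > 0"
proof -
  have "\<one> \<in> P \<inter> N" using subgroup.one_closed[OF assms] by simp
  moreover have "finite (P \<inter> N)" using finite_subset[OF _ finite_carrier] subgroup.subset[OF assms] by blast
  ultimately show ?thesis by (auto simp: card_gt_0_iff)
qed

text \<open>Since \<open>R\<close> meets each \<open>P\<close>-orbit at most once, only the stabiliser \<open>P \<inter> N\<close> of
  block \<open>j\<close> contributes to block \<open>j\<close> of the orbit sum.\<close>

lemma block_orbit_sum_separated:
  assumes P: "subgroup P G" and R: "R \<subseteq> {..<m}"
    and sep: "\<And>i j. i \<in> R \<Longrightarrow> j \<in> R \<Longrightarrow> in_orbit P i j \<Longrightarrow> i = j"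
    and u: "u \<in> carrier_vec (m * d)" and supp: "\<And>k. k < m \<Longrightarrow> k \<notin> R \<Longrightarrow> block d k u = 0\<^sub>v d"
    and j: "j \<in> R" and fixed: "block d j u \<in> fix_space d \<rho> (tconj_set j (P \<inter> N))"
  shows "block d j (orbit_sum P u) = real (card (P \<inter> N)) \<cdot>\<^sub>v block d j u"
proof (rule eq_vecI)
  have Pc: "P \<subseteq> carrier G" using subgroup.subset[OF P] .
  have jm: "j < m" using j R by auto
  fix a assume "a < dim_vec (real (card (P \<inter> N)) \<cdot>\<^sub>v block d j u)"
  then have a: "a < d" by simp
  have summand: "(\<rho> (tconj j p (\<sigma> p j)) *\<^sub>v block d (\<sigma> p j) u) $ a = (if p \<in> N then block d j u $ a else 0)"
    if p: "p \<in> P" for p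
  proof (cases "\<sigma> p j \<in> R")
    case True
    then have "\<sigma> p j = j" using sep[OF j True] p unfolding in_orbit_def by metis
    moreover from this have "p \<in> N" using \<sigma>_eq_self_iff[of p j] p Pc jm by auto
    moreover from this have "tconj j p j \<in> tconj_set j (P \<inter> N)" unfolding tconj_set_def using p by auto
    ultimately show ?thesis using fixed unfolding fix_space_def by auto
  next
    case False
    then have "p \<notin> N" using \<sigma>_eq_self_iff[of p j] p Pc jm j by auto
    moreover have "block d (\<sigma> p j) u = 0\<^sub>v d" using supp[OF \<sigma>_less False] p Pc jm by auto
    ultimately show ?thesis using tconj_\<sigma>_mem[of p j] p Pc jm a by auto
  qed
  have "block d j (orbit_sum P u) $ a = (\<Sum>p\<in>P. if p \<in> N then block d j u $ a else 0)"
    using block_orbit_sum[OF Pc u jm a] summand by simp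
  also have "\<dots> = real (card (P \<inter> N)) * block d j u $ a"
    using finite_subset[OF Pc finite_carrier] by (simp add: sum.If_cases Int_def)
  finally show "block d j (orbit_sum P u) $ a = (real (card (P \<inter> N)) \<cdot>\<^sub>v block d j u) $ a"
    using a by simp
qed simp

lemma fix_dim_Ind_ge:
  assumes P: "subgroup P G" and R: "R \<subseteq> {..<m}"
    and sep: "\<And>i j. i \<in> R \<Longrightarrow> j \<in> R \<Longrightarrow> in_orbit P i j \<Longrightarrow> i = j"
  shows "(\<Sum>i\<in>R. fix_dim d \<rho> (tconj_set i (P \<inter> N))) \<le> fix_dim (m * d) Ind P"
proof -
  define S where "S i = (if i \<in> R then fix_space d \<rho> (tconj_set i (P \<inter> N)) else {0\<^sub>v d})" for i
  have S: "real_subspace d (S i)" if "i < m" for i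
    unfolding S_def using real_subspace_fix_space_rho[OF tconj_set_subset[OF that]] real_subspace_zero
    by auto
  let ?X = "block_prod m d S"
  have X: "u \<in> carrier_vec (m * d)" "\<And>k. k < m \<Longrightarrow> k \<notin> R \<Longrightarrow> block d k u = 0\<^sub>v d"
    "\<And>j. j \<in> R \<Longrightarrow> block d j u \<in> fix_space d \<rho> (tconj_set j (P \<inter> N))" if "u \<in> ?X" for u
    using that R unfolding block_prod_def S_def by auto
  have c: "real (card (P \<inter> N)) \<noteq> 0" using card_Int_N_pos[OF P] by simp
  have "linear_on ?X (fix_space (m * d) Ind P) (orbit_sum P)"
    using Ind_mult_orbit_sum[OF P] orbit_sum_add orbit_sum_smult X(1)
    by (intro linear_onI) (auto simp: fix_space_def)
  moreover have "inj_on (orbit_sum P) ?X"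
  proof (rule inj_onI, rule eq_vec_blockI[of _ m d])
    fix u v j assume u: "u \<in> ?X" and v: "v \<in> ?X" and eq: "orbit_sum P u = orbit_sum P v" and j: "j < m"
    show "block d j u = block d j v"
    proof (cases "j \<in> R")
      case True
      then have "real (card (P \<inter> N)) \<cdot>\<^sub>v block d j u = real (card (P \<inter> N)) \<cdot>\<^sub>v block d j v"
        using block_orbit_sum_separated[OF P R sep X(1,2)[OF u] True X(3)[OF u True]]
          block_orbit_sum_separated[OF P R sep X(1,2)[OF v] True X(3)[OF v True]] eq by metis
      then show ?thesis using smult_vec_cancel[OF c block_carrier block_carrier] by simp
    qed (use X(2)[OF u j] X(2)[OF v j] in simp)
  qed (use X(1) in auto)
  ultimately have "subspace_dim (m * d) ?X \<le> fix_dim (m * d) Ind P"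
    unfolding fix_dim_eq_subspace_dim
    by (intro subspace_dim_le_of_inj_on real_subspace_fix_space_Ind real_subspace_block_prod S)
  moreover have "subspace_dim (m * d) ?X = (\<Sum>i\<in>R. fix_dim d \<rho> (tconj_set i (P \<inter> N)))"
    unfolding S_def fix_dim_eq_subspace_dim using R
    by (intro subspace_dim_block_prod_on real_subspace_fix_space_rho tconj_set_subset) auto
  ultimately show ?thesis by simp
qed

end

section \<open>Orbits of the cosets and the weak gap condition\<close>

context induced_rep
begin

lemma in_orbit_refl: "subgroup H G \<Longrightarrow> i < m \<Longrightarrow> in_orbit H i i"
  unfolding in_orbit_def using subgroup.one_closed \<sigma>_one by metis

lemma in_orbit_sym:
  assumes H: "subgroup H G" and i: "i < m" and "in_orbit H i j" shows "in_orbit H j i"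
proof -
  obtain h where h: "h \<in> H" "\<sigma> h i = j" using assms(3) unfolding in_orbit_def by blast
  then have "\<sigma> (inv h) j = i" using \<sigma>_inv[of h i] subgroup.subset[OF H] i by auto
  then show ?thesis using subgroup.m_inv_closed[OF H h(1)] unfolding in_orbit_def by blast
qed

lemma in_orbit_trans:
  assumes H: "subgroup H G" and i: "i < m" and "in_orbit H i j" "in_orbit H j k" shows "in_orbit H i k"
proof -
  obtain h h' where "h \<in> H" "\<sigma> h i = j" "h' \<in> H" "\<sigma> h' j = k"
    using assms(3,4) unfolding in_orbit_def by blast
  then have "h \<otimes> h' \<in> H" "\<sigma> (h \<otimes> h') i = k"
    using subgroup.m_closed[OF H] \<sigma>_mult[of h h' i] subgroup.subset[OF H] i by auto
  then show ?thesis unfolding in_orbit_def by blast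
qed

lemma in_orbit_less: "H \<subseteq> carrier G \<Longrightarrow> i < m \<Longrightarrow> in_orbit H i j \<Longrightarrow> j < m"
  unfolding in_orbit_def using \<sigma>_less by blast

lemma in_orbit_mono: "P \<subseteq> H \<Longrightarrow> in_orbit P i j \<Longrightarrow> in_orbit H i j"
  unfolding in_orbit_def by blast

definition orbit_reps :: "'a set \<Rightarrow> nat set" where
  "orbit_reps H = {i. i < m \<and> (\<forall>j<m. in_orbit H i j \<longrightarrow> i \<le> j)}"

lemma orbit_reps_subset: "orbit_reps H \<subseteq> {..<m}"
  unfolding orbit_reps_def by auto

lemma orbit_reps_cover:
  assumes H: "subgroup H G" and i: "i < m" shows "\<exists>r\<in>orbit_reps H. in_orbit H i r"
proof -
  define r where "r = (LEAST j. in_orbit H i j)"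
  have r: "in_orbit H i r" unfolding r_def using in_orbit_refl[OF H i] by (rule LeastI)
  have "r < m" using in_orbit_less[OF subgroup.subset[OF H] i r] .
  moreover have "r \<le> j" if "in_orbit H r j" for j
    unfolding r_def using in_orbit_trans[OF H i r that] by (rule Least_le)
  ultimately show ?thesis using r unfolding orbit_reps_def by auto
qed

lemma orbit_reps_unique:
  assumes H: "subgroup H G" and "i \<in> orbit_reps H" "j \<in> orbit_reps H" "in_orbit H i j"
  shows "i = j"
  using assms in_orbit_sym[OF H, of i j] unfolding orbit_reps_def by (simp add: le_antisym)

lemma tconj_hom: "i < m \<Longrightarrow> (\<lambda>k. tconj i k i) \<in> hom G G"
  using tconj_mult[of i i i] by (auto intro!: homI)

lemma inj_on_tconj: "i < m \<Longrightarrow> inj_on (\<lambda>k. tconj i k i) (carrier G)"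
  by (auto simp: inj_on_def tconj_def)

lemma subgroup_tconj_set: "i < m \<Longrightarrow> subgroup K G \<Longrightarrow> subgroup (tconj_set i K) G"
  unfolding tconj_set_def using tconj_hom
  by (intro group_hom.subgroup_img_is_subgroup) (auto simp: group_hom_def group_hom_axioms_def)

lemma tconj_set_psubset: "i < m \<Longrightarrow> K' \<subset> K \<Longrightarrow> K \<subseteq> carrier G \<Longrightarrow> tconj_set i K' \<subset> tconj_set i K"
  unfolding tconj_set_def using inj_on_subset[OF inj_on_tconj] by (rule image_strict_mono)

lemma prime_power_order_tconj_set:
  "i < m \<Longrightarrow> K \<subseteq> carrier G \<Longrightarrow> prime_power_order K \<Longrightarrow> prime_power_order (tconj_set i K)"
  unfolding prime_power_order_def tconj_set_def
  using card_image[OF inj_on_subset[OF inj_on_tconj]] by simp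

lemma fix_dim_Ind_gap_psubset_Int:
  assumes wg: "weak_gap_condition G N d \<rho>" and P: "subgroup P G" and H: "subgroup H G"
    and ppo: "prime_power_order P" and PH: "P \<subseteq> H" and strict: "P \<inter> N \<subset> H \<inter> N"
  shows "2 * fix_dim (m * d) Ind H \<le> fix_dim (m * d) Ind P"
proof -
  let ?R = "orbit_reps H"
  have PN: "subgroup (P \<inter> N) G" and HN: "subgroup (H \<inter> N) G"
    using subgroups_Inter_pair[OF P is_subgroup] subgroups_Inter_pair[OF H is_subgroup] .
  have ppoPN: "prime_power_order (P \<inter> N)" using prime_power_order_subgroup[OF ppo P PN] by auto
  have gap: "2 * fix_dim d \<rho> (tconj_set i (H \<inter> N)) \<le> fix_dim d \<rho> (tconj_set i (P \<inter> N))"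
    if "i \<in> ?R" for i
  proof -
    have i: "i < m" using that orbit_reps_subset by auto
    have "P \<inter> N \<subseteq> carrier G" "H \<inter> N \<subseteq> carrier G" using subgroup.subset[OF P] by auto
    then show ?thesis
      using wg subgroup_tconj_set[OF i PN] subgroup_tconj_set[OF i HN]
        tconj_set_subset[OF i, of "P \<inter> N"] tconj_set_subset[OF i, of "H \<inter> N"]
        prime_power_order_tconj_set[OF i _ ppoPN] tconj_set_psubset[OF i strict]
      unfolding weak_gap_condition_def by blast
  qed
  have "2 * fix_dim (m * d) Ind H \<le> 2 * (\<Sum>i\<in>?R. fix_dim d \<rho> (tconj_set i (H \<inter> N)))"
    using fix_dim_Ind_le[OF subgroup.subset[OF H] orbit_reps_subset orbit_reps_cover[OF H]] by simp
  also have "\<dots> \<le> (\<Sum>i\<in>?R. fix_dim d \<rho> (tconj_set i (P \<inter> N)))"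
    unfolding sum_distrib_left using gap by (rule sum_mono)
  also have "\<dots> \<le> fix_dim (m * d) Ind P"
    using orbit_reps_unique[OF H] in_orbit_mono[OF PH]
    by (intro fix_dim_Ind_ge[OF P orbit_reps_subset]) blast
  finally show ?thesis .
qed

lemma ex_in_orbit_not_in_orbit:
  assumes P: "subgroup P G" and H: "subgroup H G" and PH: "P \<subset> H" and eq: "P \<inter> N = H \<inter> N"
    and i: "i < m"
  shows "\<exists>j. in_orbit H i j \<and> \<not> in_orbit P i j"
proof (rule ccontr)
  assume "\<nexists>j. in_orbit H i j \<and> \<not> in_orbit P i j"
  then have all: "\<exists>p\<in>P. \<sigma> p i = \<sigma> h i" if "h \<in> H" for h
    using that unfolding in_orbit_def by blast
  have "h \<in> P" if h: "h \<in> H" for h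
  proof -
    obtain p where p: "p \<in> P" "\<sigma> p i = \<sigma> h i" using all[OF h] ..
    have hc: "h \<in> carrier G" and pc: "p \<in> carrier G" and ip: "inv p \<in> H"
      using h p PH subgroup.subset[OF H] subgroup.m_inv_closed[OF H, of p] by auto
    have "\<sigma> (h \<otimes> inv p) i = i"
      using \<sigma>_mult[OF hc inv_closed[OF pc] i] p(2) \<sigma>_inv[OF pc i] by simp
    then have "h \<otimes> inv p \<in> H \<inter> N"
      using \<sigma>_eq_self_iff[OF m_closed[OF hc inv_closed[OF pc]] i] subgroup.m_closed[OF H h ip] by simp
    then have "h \<otimes> inv p \<otimes> p \<in> P" using eq subgroup.m_closed[OF P _ p(1)] by blast
    then show "h \<in> P" using hc pc by (simp add: m_assoc)
  qed
  then show False using PH by blast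
qed

text \<open>If \<open>P \<inter> N = H \<inter> N\<close>, every \<open>H\<close>-orbit of cosets splits into several \<open>P\<close>-orbits,
  so a second system \<open>f ` R\<close> of \<open>H\<close>-orbit representatives can be chosen that
  together with the first one still meets every \<open>P\<close>-orbit at most once.\<close>

lemma fix_dim_Ind_gap_eq_Int:
  assumes P: "subgroup P G" and H: "subgroup H G" and PH: "P \<subset> H" and eq: "P \<inter> N = H \<inter> N"
  shows "2 * fix_dim (m * d) Ind H \<le> fix_dim (m * d) Ind P"
proof -
  have Hc: "H \<subseteq> carrier G" using subgroup.subset[OF H] .
  have "\<exists>j. in_orbit H i j \<and> \<not> in_orbit P i j" if "i < m" for i
    using ex_in_orbit_not_in_orbit[OF P H PH eq that] .
  then obtain f where f: "\<And>i. i < m \<Longrightarrow> in_orbit H i (f i) \<and> \<not> in_orbit P i (f i)"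
    by (metis (no_types))
  let ?R = "orbit_reps H"
  let ?R' = "f ` ?R"
  have R_less: "i < m" if "i \<in> ?R" for i using that orbit_reps_subset by auto
  have f_less: "f i < m" if "i \<in> ?R" for i
    using in_orbit_less[OF Hc R_less[OF that]] f[OF R_less[OF that]] by blast
  have R: "?R \<subseteq> {..<m}" "?R' \<subseteq> {..<m}" using R_less f_less by auto
  have rep: "\<exists>r\<in>?R. (j = r \<or> j = f r) \<and> in_orbit H r j" if "j \<in> ?R \<union> ?R'" for j
    using that f[OF R_less] in_orbit_refl[OF H R_less] by blast
  have cover': "\<exists>j\<in>?R'. in_orbit H i j" if i: "i < m" for i
  proof -
    obtain r where r: "r \<in> ?R" "in_orbit H i r" using orbit_reps_cover[OF H i] ..
    then have "in_orbit H i (f r)" using in_orbit_trans[OF H i] f[OF R_less] by blast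
    then show ?thesis using r(1) by blast
  qed
  have not_P_orb: "\<not> in_orbit P r (f r)" "\<not> in_orbit P (f r) r" if "r \<in> ?R" for r
    using f[OF R_less[OF that]] in_orbit_sym[OF P f_less[OF that]] by blast+
  have sep: "j = j'" if j: "j \<in> ?R \<union> ?R'" and j': "j' \<in> ?R \<union> ?R'" and P_orb: "in_orbit P j j'" for j j'
  proof -
    from rep[OF j] obtain r where r: "r \<in> ?R" "j = r \<or> j = f r" "in_orbit H r j" by blast
    from rep[OF j'] obtain r' where r': "r' \<in> ?R" "j' = r' \<or> j' = f r'" "in_orbit H r' j'" by blast
    have "j' < m" using j' R by auto
    have "in_orbit H r j'" using in_orbit_trans[OF H R_less[OF r(1)] r(3) in_orbit_mono[OF _ P_orb]] PH by blast
    then have "in_orbit H r r'" using in_orbit_trans[OF H R_less[OF r(1)]] in_orbit_sym[OF H R_less[OF r'(1)] r'(3)] by blast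
    then have "r = r'" using orbit_reps_unique[OF H r(1) r'(1)] by simp
    then show ?thesis using r(2) r'(2) P_orb not_P_orb[OF r(1)] by auto
  qed
  have disjoint: "?R \<inter> ?R' = {}"
  proof (rule ccontr)
    assume "?R \<inter> ?R' \<noteq> {}"
    then obtain r where r: "r \<in> ?R" "f r \<in> ?R" by blast
    then have "r = f r" using orbit_reps_unique[OF H] f[OF R_less[OF r(1)]] by blast
    then show False using not_P_orb[OF r(1)] in_orbit_refl[OF P R_less[OF r(1)]] by simp
  qed
  have "2 * fix_dim (m * d) Ind H \<le>
      (\<Sum>i\<in>?R. fix_dim d \<rho> (tconj_set i (H \<inter> N))) + (\<Sum>i\<in>?R'. fix_dim d \<rho> (tconj_set i (H \<inter> N)))"
    using fix_dim_Ind_le[OF Hc R(1) orbit_reps_cover[OF H]] fix_dim_Ind_le[OF Hc R(2) cover'] by simp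
  also have "\<dots> = (\<Sum>i\<in>?R \<union> ?R'. fix_dim d \<rho> (tconj_set i (P \<inter> N)))"
    unfolding eq using finite_subset[OF R(1)] finite_subset[OF R(2)]
    by (intro sum.union_disjoint[symmetric] disjoint) auto
  also have "\<dots> \<le> fix_dim (m * d) Ind P"
    using R sep by (intro fix_dim_Ind_ge[OF P]) auto
  finally show ?thesis .
qed

lemma weak_gap_condition_Ind:
  assumes "weak_gap_condition G N d \<rho>"
  shows "weak_gap_condition G (carrier G) (ind_deg G N d) Ind"
  unfolding weak_gap_condition_def ind_deg_eq
proof (intro allI impI)
  fix P H assume P: "subgroup P G" and "P \<subseteq> carrier G" and ppo: "prime_power_order P"
    and H: "subgroup H G" and PH: "P \<subset> H" and "H \<subseteq> carrier G"
  show "2 * fix_dim (m * d) Ind H \<le> fix_dim (m * d) Ind P"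
  proof (cases "P \<inter> N = H \<inter> N")
    case True
    then show ?thesis by (rule fix_dim_Ind_gap_eq_Int[OF P H PH])
  next
    case False
    then have "P \<inter> N \<subset> H \<inter> N" using PH by blast
    then show ?thesis using fix_dim_Ind_gap_psubset_Int[OF assms P H ppo] PH by blast
  qed
qed

end

section \<open>Conditions (ii) and (iii)\<close>

context induced_rep
begin

lemma rho_mult_vec_carrier [simp]: "x \<in> N \<Longrightarrow> v \<in> carrier_vec d \<Longrightarrow> \<rho> x *\<^sub>v v \<in> carrier_vec d"
  by (rule mult_mat_vec_carrier[OF rho_carrier])

lemma fix_dim_tconj_set_le_Ind:
  "subgroup P G \<Longrightarrow> i < m \<Longrightarrow> fix_dim d \<rho> (tconj_set i (P \<inter> N)) \<le> fix_dim (m * d) Ind P"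
  using fix_dim_Ind_ge[of P "{i}"] by simp

lemma rho_tconj_mult_vec:
  assumes i: "i < m" and T: "t i \<in> N" and n: "n \<in> N" and v: "v \<in> carrier_vec d"
  shows "\<rho> (tconj i n i) *\<^sub>v (\<rho> (inv (t i)) *\<^sub>v v) = \<rho> (inv (t i)) *\<^sub>v (\<rho> n *\<^sub>v v)"
proof -
  have iT: "inv (t i) \<in> N" using T by simp
  have x: "tconj i n i \<in> N" using iT n T unfolding tconj_def by simp
  have "tconj i n i \<otimes> inv (t i) = inv (t i) \<otimes> n"
    unfolding tconj_def using i n by (simp add: m_assoc)
  then have "\<rho> (tconj i n i) * \<rho> (inv (t i)) = \<rho> (inv (t i)) * \<rho> n"
    using rho_mult[OF x iT] rho_mult[OF iT n] by simp
  then show ?thesis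
    using assoc_mult_mat_vec[OF rho_carrier[OF x] rho_carrier[OF iT] v]
      assoc_mult_mat_vec[OF rho_carrier[OF iT] rho_carrier[OF n] v] by simp
qed

lemma rho_mult_vec_cancel:
  assumes x: "x \<in> N" and v: "v \<in> carrier_vec d" and w: "w \<in> carrier_vec d"
  shows "\<rho> x *\<^sub>v v = \<rho> x *\<^sub>v w \<longleftrightarrow> v = w"
proof
  assume "\<rho> x *\<^sub>v v = \<rho> x *\<^sub>v w"
  then have "\<rho> (inv x) *\<^sub>v (\<rho> x *\<^sub>v v) = \<rho> (inv x) *\<^sub>v (\<rho> x *\<^sub>v w)" by simp
  then show "v = w" using rho_inv_cancel(2)[OF x v] rho_inv_cancel(2)[OF x w] by simp
qed simp

lemma rho_tconj_fixes_iff: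
  assumes i: "i < m" and T: "t i \<in> N" and n: "n \<in> N" and v: "v \<in> carrier_vec d"
  shows "\<rho> (tconj i n i) *\<^sub>v (\<rho> (inv (t i)) *\<^sub>v v) = \<rho> (inv (t i)) *\<^sub>v v \<longleftrightarrow> \<rho> n *\<^sub>v v = v"
  using rho_tconj_mult_vec[OF assms] rho_mult_vec_cancel[of "inv (t i)" "\<rho> n *\<^sub>v v" v] T n v by simp

lemma fix_dim_le_tconj_set:
  assumes i: "i < m" and T: "t i \<in> N" and K: "K \<subseteq> N"
  shows "fix_dim d \<rho> K \<le> fix_dim d \<rho> (tconj_set i K)"
  unfolding fix_dim_eq_subspace_dim
proof (rule subspace_dim_le_of_inj_on)
  have iT: "inv (t i) \<in> N" using T by simp
  show "linear_on (fix_space d \<rho> K) (fix_space d \<rho> (tconj_set i K)) (\<lambda>v. \<rho> (inv (t i)) *\<^sub>v v)"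
  proof (rule linear_onI)
    fix v assume v: "v \<in> fix_space d \<rho> K"
    then show "\<rho> (inv (t i)) *\<^sub>v v \<in> fix_space d \<rho> (tconj_set i K)"
      using rho_tconj_fixes_iff[OF i T] K iT unfolding fix_space_def tconj_set_def by auto
  qed (use iT mult_add_distrib_mat_vec[OF rho_carrier] mult_mat_vec[OF rho_carrier] in
       \<open>auto simp: fix_space_def\<close>)
  show "inj_on (\<lambda>v. \<rho> (inv (t i)) *\<^sub>v v) (fix_space d \<rho> K)"
    using rho_mult_vec_cancel[OF iT] unfolding fix_space_def by (auto intro: inj_onI)
qed (use real_subspace_fix_space_rho K tconj_set_subset[OF i K] in auto)

lemma condition_ii_Ind:
  assumes c2: "condition_ii G N d \<rho>"
  shows "condition_ii G (carrier G) (ind_deg G N d) Ind"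
proof -
  obtain i where i: "i < m" "t i \<in> N" using exists_t_in_N by blast
  have "5 \<le> fix_dim (m * d) Ind P" if P: "subgroup P G" and ppo: "prime_power_order P" for P
  proof -
    have PN: "subgroup (P \<inter> N) G" using subgroups_Inter_pair[OF P is_subgroup] .
    have "prime_power_order (tconj_set i (P \<inter> N))"
      using prime_power_order_tconj_set[OF i(1) _ prime_power_order_subgroup[OF ppo P PN]]
        subgroup.subset[OF P] by auto
    then have "5 \<le> fix_dim d \<rho> (tconj_set i (P \<inter> N))"
      using c2 subgroup_tconj_set[OF i(1) PN] tconj_set_subset[OF i(1), of "P \<inter> N"]
      unfolding condition_ii_def by blast
    then show ?thesis using fix_dim_tconj_set_le_Ind[OF P i(1)] by linarith
  qed
  moreover have "2 \<le> fix_dim (m * d) Ind H" if "pseudocyclic G H" for H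
  proof -
    have "2 \<le> fix_dim d \<rho> (H \<inter> N)"
      using c2 pseudocyclic_Int_normal[OF normal_axioms that] unfolding condition_ii_def by blast
    also have "\<dots> \<le> fix_dim d \<rho> (tconj_set i (H \<inter> N))" using fix_dim_le_tconj_set[OF i] by blast
    also have "\<dots> \<le> fix_dim (m * d) Ind H"
      using fix_dim_tconj_set_le_Ind[OF _ i(1)] that unfolding pseudocyclic_def by blast
    finally show ?thesis .
  qed
  ultimately show ?thesis unfolding condition_ii_def ind_deg_eq by blast
qed

lemma block_orbit_sum_eq_zero:
  assumes P: "P \<subseteq> carrier G" and u: "u \<in> carrier_vec (m * d)" and j: "j < m"
    and zero: "\<And>p. p \<in> P \<Longrightarrow> block d (\<sigma> p j) u = 0\<^sub>v d"
  shows "block d j (orbit_sum P u) = 0\<^sub>v d"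
proof (rule eq_vecI)
  fix a assume "a < dim_vec (0\<^sub>v d)"
  then have a: "a < d" by simp
  have "(\<rho> (tconj j p (\<sigma> p j)) *\<^sub>v block d (\<sigma> p j) u) $ a = 0" if "p \<in> P" for p
    using zero[OF that] tconj_\<sigma>_mem[of p j] P that j a by (auto simp: mult_mat_zero_vec)
  then show "block d j (orbit_sum P u) $ a = 0\<^sub>v d $ a"
    using block_orbit_sum[OF P u j a] a by simp
qed simp

text \<open>An element fixing the orbit sum must map a block of the \<open>H\<close>-orbit of \<open>i\<close> onto
  block \<open>i\<close>; after correcting it by an element of \<open>H\<close> it fixes block \<open>i\<close>, hence lies in \<open>N\<close>.\<close>

lemma stabiliser_orbit_sum_subset:
  assumes H: "subgroup H G" and i: "i < m" and u: "u \<in> carrier_vec (m * d)"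
    and supp: "\<And>k. k < m \<Longrightarrow> k \<noteq> i \<Longrightarrow> block d k u = 0\<^sub>v d"
    and nz: "block d i (orbit_sum H u) \<noteq> 0\<^sub>v d"
    and stab: "\<And>n. n \<in> N \<Longrightarrow>
      \<rho> (tconj i n i) *\<^sub>v block d i (orbit_sum H u) = block d i (orbit_sum H u) \<Longrightarrow> n \<in> H"
    and g: "g \<in> carrier G" and gw: "Ind g *\<^sub>v orbit_sum H u = orbit_sum H u"
  shows "g \<in> H"
proof -
  let ?w = "orbit_sum H u"
  have Hc: "H \<subseteq> carrier G" using subgroup.subset[OF H] .
  define j where "j = \<sigma> g i"
  have j: "j < m" "tconj i g j \<in> N" using \<sigma>_less[OF g i] tconj_\<sigma>_mem[OF g i] unfolding j_def by auto
  have "block d i ?w = \<rho> (tconj i g j) *\<^sub>v block d j ?w"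
    using block_Ind_mult_vec[OF g _ i, of ?w] gw unfolding j_def by simp
  then have "block d j ?w \<noteq> 0\<^sub>v d" using nz j(2) by (auto simp: mult_mat_zero_vec)
  have "\<exists>h\<in>H. \<sigma> h j = i"
  proof (rule ccontr)
    assume "\<not> (\<exists>h\<in>H. \<sigma> h j = i)"
    then have "block d (\<sigma> h j) u = 0\<^sub>v d" if "h \<in> H" for h
      using supp[OF \<sigma>_less[OF _ j(1)]] that Hc by auto
    then have "block d j ?w = 0\<^sub>v d" by (rule block_orbit_sum_eq_zero[OF Hc u j(1)])
    then show False using \<open>block d j ?w \<noteq> 0\<^sub>v d\<close> by simp
  qed
  then obtain h where h: "h \<in> H" "\<sigma> h j = i" ..
  define n where "n = g \<otimes> h"
  have hc: "h \<in> carrier G" and nc: "n \<in> carrier G" using h Hc g unfolding n_def by auto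
  have "\<sigma> n i = i" using \<sigma>_mult[OF g hc i] h(2) unfolding n_def j_def by simp
  then have nN: "n \<in> N" using \<sigma>_eq_self_iff[OF nc i] by simp
  have "Ind n *\<^sub>v ?w = ?w"
    using Ind_mult_mult_vec[OF g hc] Ind_mult_orbit_sum[OF H h(1) u] gw unfolding n_def by simp
  then have "\<rho> (tconj i n i) *\<^sub>v block d i ?w = block d i ?w"
    using block_Ind_mult_vec[OF nc _ i, of ?w] \<open>\<sigma> n i = i\<close> by simp
  then have "n \<in> H" by (rule stab[OF nN])
  then have "n \<otimes> inv h \<in> H" using H h(1) by (simp add: subgroup.m_closed subgroup.m_inv_closed)
  then show "g \<in> H" using g hc unfolding n_def by (simp add: m_assoc)
qed

text \<open>The block index is chosen with \<open>t i \<in> N\<close>, so that conjugation by \<open>t i\<close> stays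
  inside \<open>N\<close>.\<close>

lemma isotropy_Ind:
  assumes H: "subgroup H G" and v: "v \<in> carrier_vec d" "v \<noteq> 0\<^sub>v d"
    and Hv: "H \<inter> N = {g \<in> N. \<rho> g *\<^sub>v v = v}"
  shows "\<exists>w\<in>carrier_vec (m * d). H = {g \<in> carrier G. Ind g *\<^sub>v w = w}"
proof -
  obtain i where i: "i < m" "t i \<in> N" using exists_t_in_N by blast
  define v' where "v' = \<rho> (inv (t i)) *\<^sub>v v"
  have v'c: "v' \<in> carrier_vec d" unfolding v'_def using i(2) v(1) by simp
  have v'_fix: "\<rho> (tconj i n i) *\<^sub>v v' = v' \<longleftrightarrow> n \<in> H" if "n \<in> N" for n
    using rho_tconj_fixes_iff[OF i that v(1)] Hv that unfolding v'_def by blast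
  have "v' \<noteq> 0\<^sub>v d"
    using rho_inv_cancel(1)[OF i(2) v(1)] v(2) i(2) unfolding v'_def by (auto simp: mult_mat_zero_vec)
  moreover define c where "c = real (card (H \<inter> N))"
  moreover have "c \<noteq> 0" using card_Int_N_pos[OF H] unfolding c_def by simp
  ultimately have cv'0: "c \<cdot>\<^sub>v v' \<noteq> 0\<^sub>v d" using smult_vec_cancel[of c v' d "0\<^sub>v d"] v'c by auto
  define u where "u = of_blocks m d (\<lambda>k. if k = i then v' else 0\<^sub>v d)"
  have u: "u \<in> carrier_vec (m * d)" unfolding u_def by simp
  have block_u: "block d k u = (if k = i then v' else 0\<^sub>v d)" if "k < m" for k
    unfolding u_def using that v'c by simp
  define w where "w = orbit_sum H u"
  have "block d i u \<in> fix_space d \<rho> (tconj_set i (H \<inter> N))"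
    using block_u[OF i(1)] v'c v'_fix unfolding fix_space_def tconj_set_def by auto
  then have block_w: "block d i w = c \<cdot>\<^sub>v v'"
    unfolding w_def c_def using block_u[OF i(1)] block_u i(1)
    by (subst block_orbit_sum_separated[OF H _ _ u, of "{i}" i]) auto
  have "g \<in> H" if g: "g \<in> carrier G" and gw: "Ind g *\<^sub>v w = w" for g
  proof (rule stabiliser_orbit_sum_subset[OF H i(1) u _ _ _ g gw[unfolded w_def]])
    show "block d k u = 0\<^sub>v d" if "k < m" "k \<noteq> i" for k using block_u that by simp
    show "block d i (orbit_sum H u) \<noteq> 0\<^sub>v d" using block_w cv'0 unfolding w_def by simp
  next
    fix n assume n: "n \<in> N"
      and fixed: "\<rho> (tconj i n i) *\<^sub>v block d i (orbit_sum H u) = block d i (orbit_sum H u)"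
    have x: "tconj i n i \<in> N" using tconj_set_subset[OF i(1), of "{n}"] n unfolding tconj_set_def by simp
    have "c \<cdot>\<^sub>v (\<rho> (tconj i n i) *\<^sub>v v') = c \<cdot>\<^sub>v v'"
      using fixed block_w mult_mat_vec[OF rho_carrier[OF x] v'c] unfolding w_def by simp
    then have "\<rho> (tconj i n i) *\<^sub>v v' = v'"
      using smult_vec_cancel[OF \<open>c \<noteq> 0\<close> rho_mult_vec_carrier[OF x v'c] v'c] by simp
    then show "n \<in> H" using v'_fix[OF n] by simp
  qed
  moreover have "Ind g *\<^sub>v w = w" if "g \<in> H" for g
    using Ind_mult_orbit_sum[OF H that u] unfolding w_def .
  moreover have "w \<in> carrier_vec (m * d)" unfolding w_def by simp
  ultimately show ?thesis using subgroup.subset[OF H] by (intro bexI[of _ w]) auto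
qed

lemma nonzero_isotropy:
  assumes c2: "condition_ii G N d \<rho>" and c3: "condition_iii G N d \<rho>"
    and K: "K \<subseteq> N" and pc: "pseudocyclic G K"
  shows "\<exists>v\<in>carrier_vec d. v \<noteq> 0\<^sub>v d \<and> K = {g \<in> N. \<rho> g *\<^sub>v v = v}"
proof -
  obtain v where v: "v \<in> carrier_vec d" "K = {g \<in> N. \<rho> g *\<^sub>v v = v}"
    using c3 K pc unfolding condition_iii_def is_isotropy_def by blast
  show ?thesis
  proof (cases "v = 0\<^sub>v d")
    case True
    then have "K = N" using v mult_mat_zero_vec[OF rho_carrier] by auto
    moreover have "2 \<le> fix_dim d \<rho> K" using c2 K pc unfolding condition_ii_def by blast
    ultimately have "fix_space d \<rho> N \<noteq> {0\<^sub>v d}"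
      by (auto simp: fix_dim_eq_subspace_dim subspace_dim_zero)
    moreover have "0\<^sub>v d \<in> fix_space d \<rho> N"
      using mult_mat_zero_vec[OF rho_carrier] unfolding fix_space_def by auto
    ultimately obtain v' where "v' \<in> fix_space d \<rho> N" "v' \<noteq> 0\<^sub>v d" by blast
    then show ?thesis using \<open>K = N\<close> unfolding fix_space_def by auto
  qed (use v in blast)
qed

lemma condition_iii_Ind:
  assumes c2: "condition_ii G N d \<rho>" and c3: "condition_iii G N d \<rho>"
  shows "condition_iii G (carrier G) (ind_deg G N d) Ind"
  unfolding condition_iii_def is_isotropy_def ind_deg_eq
proof (intro allI impI)
  fix H assume "H \<subseteq> carrier G" and pc: "pseudocyclic G H"
  obtain v where "v \<in> carrier_vec d" "v \<noteq> 0\<^sub>v d" "H \<inter> N = {g \<in> N. \<rho> g *\<^sub>v v = v}"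
    using nonzero_isotropy[OF c2 c3 _ pseudocyclic_Int_normal[OF normal_axioms pc]] by blast
  then show "\<exists>w\<in>carrier_vec (m * d). H = {g \<in> carrier G. Ind g *\<^sub>v w = w}"
    using isotropy_Ind pc unfolding pseudocyclic_def by blast
qed

end

theorem mainTheorem7:
  fixes G :: "('a, 'b) monoid_scheme" and N :: "'a set"
    and d :: nat and \<rho> :: "'a \<Rightarrow> real mat"
  assumes "oliver_group G"
    and "N \<lhd> G"
    and "ind_RO_mono G N"
    and "is_rep G N d \<rho>"
    and "weak_gap_condition G N d \<rho>"
    and "condition_ii G N d \<rho>"
    and "condition_iii G N d \<rho>"
  shows "weak_gap_condition G (carrier G) (ind_deg G N d) (ind_rep G N d \<rho>)
       \<and> condition_ii G (carrier G) (ind_deg G N d) (ind_rep G N d \<rho>)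
       \<and> condition_iii G (carrier G) (ind_deg G N d) (ind_rep G N d \<rho>)"
proof -
  interpret induced_rep N G d \<rho>
    using assms(1,2,4) unfolding induced_rep_def induced_rep_axioms_def oliver_group_def by blast
  show ?thesis
    using weak_gap_condition_Ind[OF assms(5)] condition_ii_Ind[OF assms(6)]
      condition_iii_Ind[OF assms(6,7)] by blast
qed

end
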